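(* Every most compact MP-tree on $S$ can be obtained from some cubic tree $T_0$ on $S$ with $\mathrm{MP}(T_0)=\min\{\mathrm{MP}(T'): T'\text{ a cubic tree on } S\}$ by a finite sequence of edge contractions $T_0\to T_1\to\cdots\to T_k$, where each step contracts an edge $\{u,v\}$ of the current tree $T_{j}$ having at most one labelled endpoint and min-cost $\mathrm{md}(u,v)=0$ in $T_j$. Conversely, every tree obtained from such a $T_0$ by such a sequence of contractions is an MP-tree on $S$.
   Context: Fix integers $n\ge 2$ and $m\ge 1$, and finite nonempty sets $\Sigma_1,\dots,\Sigma_m$ (the states of characters $1,\dots,m$). A set of species $S=\{S_1,\dots,S_n\}$ is given, each species $S_j$ being an $m$-tuple $(s_{j,1},\dots,s_{j,m})\in\Sigma_1\times\cdots\times\Sigma_m$. A tree on $S$ is a finite unrooted tree (connected acyclic undirected graph) $T$ together with an injective map assigning each species $S_j$ to a node of $T$. Nodes receiving a species are called labelled, the others unlabelled. A cubic tree on $S$ is a tree on $S$ whose labelled nodes are exactly its leaves and in which every non-leaf node has degree exactly $3$. A fit of $T$ is a map $f$ assigning to every node $v$ a tuple $f(v)=(f(v)_1,\dots,f(v)_m)\in\Sigma_1\times\cdots\times\Sigma_m$ such that $f(v)=S_j$ whenever $v$ is labelled with $S_j$. The cost of $f$ is $\sum_{\{u,v\}\in E(T)} h(f(u),f(v))$, where $h$ is the Hamming distance. The MP-cost $\mathrm{MP}(T)$ is the minimum cost over all fits of $T$. A best fit is a fit of cost $\mathrm{MP}(T)$. An MP-tree on $S$ is a tree on $S$ whose MP-cost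 equals the minimum of $\mathrm{MP}(T)$ over all trees $T$ on $S$. A most compact MP-tree on $S$ is an MP-tree on $S$ having the minimum number of nodes among all MP-trees on $S$. Root sets: for a node $v$ of a tree $T$ and character $i$, $VV(v)_i=\{f(v)_i : f \text{ a best fit of } T\}\subseteq\Sigma_i$. For adjacent nodes $u,v$, the min-cost is $\mathrm{md}(u,v)=|\{i: VV(u)_i\cap VV(v)_i=\emptyset\}|$. Edge contraction: for an edge $\{u,v\}$ of $T$ with at most one of $u,v$ labelled, $T/\{u,v\}$ is obtained by replacing $u$ and $v$ by a single new node $w$ adjacent to every node that was adjacent to $u$ or to $v$ (other than $u,v$ themselves); $w$ carries the species of $u$ or $v$ if one of them is labelled, and is unlabelled otherwise. All other nodes, edges and labels are unchanged. *)

theory Defs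
  imports Main
begin

text \<open>Characters are indexed by i < m, species by j < n.
  States of all characters live in one type 'a; character i has state set Sig i.
  A tuple is a function nat => 'a, only its values at i < m matter.
  Species j is the tuple S j.
  A tree on S is a triple (V, E, lab): node set V, edge set E (2-element sets),
  lab j = node carrying species j (j < n).\<close>

type_synonym 'a tuple = "nat \<Rightarrow> 'a"
type_synonym ptree = "nat set \<times> nat set set \<times> (nat \<Rightarrow> nat)"

definition nodes :: "ptree \<Rightarrow> nat set" where "nodes T = fst T"
definition edges :: "ptree \<Rightarrow> nat set set" where "edges T = fst (snd T)"
definition lab :: "ptree \<Rightarrow> nat \<Rightarrow> nat" where "lab T = snd (snd T)"

definition labelled :: "nat \<Rightarrow> ptree \<Rightarrow> nat set" where
  "labelled n T = lab T ` {..<n}"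

definition adjacent :: "ptree \<Rightarrow> nat \<Rightarrow> nat \<Rightarrow> bool" where
  "adjacent T x y \<longleftrightarrow> {x, y} \<in> edges T"

definition is_cycle :: "ptree \<Rightarrow> nat list \<Rightarrow> bool" where
  "is_cycle T cs \<longleftrightarrow> length cs \<ge> 3 \<and> distinct cs \<and> set cs \<subseteq> nodes T \<and>
     (\<forall>k < length cs. adjacent T (cs ! k) (cs ! ((k + 1) mod length cs)))"

definition connected_graph :: "ptree \<Rightarrow> bool" where
  "connected_graph T \<longleftrightarrow> (\<forall>x\<in>nodes T. \<forall>y\<in>nodes T. (adjacent T)\<^sup>*\<^sup>* x y)"

definition acyclic_graph :: "ptree \<Rightarrow> bool" where
  "acyclic_graph T \<longleftrightarrow> \<not> (\<exists>cs. is_cycle T cs)"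

definition tree_on :: "nat \<Rightarrow> ptree \<Rightarrow> bool" where
  "tree_on n T \<longleftrightarrow> finite (nodes T) \<and> nodes T \<noteq> {} \<and>
     (\<forall>e\<in>edges T. \<exists>x y. e = {x, y} \<and> x \<noteq> y \<and> x \<in> nodes T \<and> y \<in> nodes T) \<and>
     connected_graph T \<and> acyclic_graph T \<and>
     inj_on (lab T) {..<n} \<and> lab T ` {..<n} \<subseteq> nodes T"

definition degree :: "ptree \<Rightarrow> nat \<Rightarrow> nat" where
  "degree T v = card {e \<in> edges T. v \<in> e}"

definition cubic_tree_on :: "nat \<Rightarrow> ptree \<Rightarrow> bool" where
  "cubic_tree_on n T \<longleftrightarrow> tree_on n T \<and>
     (\<forall>v\<in>nodes T. (v \<in> labelled n T \<longleftrightarrow> degree T v = 1) \<and>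
                   (degree T v \<noteq> 1 \<longrightarrow> degree T v = 3))"

definition hamming :: "nat \<Rightarrow> 'a tuple \<Rightarrow> 'a tuple \<Rightarrow> nat" where
  "hamming m x y = card {i. i < m \<and> x i \<noteq> y i}"

definition is_fit :: "nat \<Rightarrow> (nat \<Rightarrow> 'a set) \<Rightarrow> nat \<Rightarrow> (nat \<Rightarrow> 'a tuple) \<Rightarrow> ptree
    \<Rightarrow> (nat \<Rightarrow> 'a tuple) \<Rightarrow> bool" where
  "is_fit m Sig n S T f \<longleftrightarrow> (\<forall>v\<in>nodes T. \<forall>i<m. f v i \<in> Sig i) \<and>
     (\<forall>j<n. \<forall>i<m. f (lab T j) i = S j i)"

definition edge_cost :: "nat \<Rightarrow> (nat \<Rightarrow> 'a tuple) \<Rightarrow> nat set \<Rightarrow> nat" where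
  "edge_cost m f e = (THE c. \<exists>x y. e = {x, y} \<and> c = hamming m (f x) (f y))"

definition fit_cost :: "nat \<Rightarrow> ptree \<Rightarrow> (nat \<Rightarrow> 'a tuple) \<Rightarrow> nat" where
  "fit_cost m T f = (\<Sum>e\<in>edges T. edge_cost m f e)"

definition MP :: "nat \<Rightarrow> (nat \<Rightarrow> 'a set) \<Rightarrow> nat \<Rightarrow> (nat \<Rightarrow> 'a tuple) \<Rightarrow> ptree \<Rightarrow> nat" where
  "MP m Sig n S T = (LEAST c. \<exists>f. is_fit m Sig n S T f \<and> c = fit_cost m T f)"

definition best_fit :: "nat \<Rightarrow> (nat \<Rightarrow> 'a set) \<Rightarrow> nat \<Rightarrow> (nat \<Rightarrow> 'a tuple) \<Rightarrow> ptree
    \<Rightarrow> (nat \<Rightarrow> 'a tuple) \<Rightarrow> bool" where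
  "best_fit m Sig n S T f \<longleftrightarrow> is_fit m Sig n S T f \<and> fit_cost m T f = MP m Sig n S T"

definition VV :: "nat \<Rightarrow> (nat \<Rightarrow> 'a set) \<Rightarrow> nat \<Rightarrow> (nat \<Rightarrow> 'a tuple) \<Rightarrow> ptree
    \<Rightarrow> nat \<Rightarrow> nat \<Rightarrow> 'a set" where
  "VV m Sig n S T v i = {f v i | f. best_fit m Sig n S T f}"

definition md :: "nat \<Rightarrow> (nat \<Rightarrow> 'a set) \<Rightarrow> nat \<Rightarrow> (nat \<Rightarrow> 'a tuple) \<Rightarrow> ptree
    \<Rightarrow> nat \<Rightarrow> nat \<Rightarrow> nat" where
  "md m Sig n S T u v = card {i. i < m \<and> VV m Sig n S T u i \<inter> VV m Sig n S T v i = {}}"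

definition MP_tree :: "nat \<Rightarrow> (nat \<Rightarrow> 'a set) \<Rightarrow> nat \<Rightarrow> (nat \<Rightarrow> 'a tuple) \<Rightarrow> ptree \<Rightarrow> bool" where
  "MP_tree m Sig n S T \<longleftrightarrow> tree_on n T \<and>
     (\<forall>T'. tree_on n T' \<longrightarrow> MP m Sig n S T \<le> MP m Sig n S T')"

definition most_compact_MP_tree :: "nat \<Rightarrow> (nat \<Rightarrow> 'a set) \<Rightarrow> nat \<Rightarrow> (nat \<Rightarrow> 'a tuple)
    \<Rightarrow> ptree \<Rightarrow> bool" where
  "most_compact_MP_tree m Sig n S T \<longleftrightarrow> MP_tree m Sig n S T \<and>
     (\<forall>T'. MP_tree m Sig n S T' \<longrightarrow> card (nodes T) \<le> card (nodes T'))"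

text \<open>Contraction T/{u,v}; the new node w is any node not among the remaining
  old nodes (it may reuse the name u or v).\<close>
definition contract :: "ptree \<Rightarrow> nat \<Rightarrow> nat \<Rightarrow> nat \<Rightarrow> ptree" where
  "contract T u v w =
     ((nodes T - {u, v}) \<union> {w},
      {e \<in> edges T. e \<inter> {u, v} = {}} \<union>
        {{w, x} | x. x \<notin> {u, v} \<and> ({u, x} \<in> edges T \<or> {v, x} \<in> edges T)},
      (\<lambda>j. if lab T j \<in> {u, v} then w else lab T j))"

definition md0_contraction_step :: "nat \<Rightarrow> (nat \<Rightarrow> 'a set) \<Rightarrow> nat \<Rightarrow> (nat \<Rightarrow> 'a tuple)
    \<Rightarrow> ptree \<Rightarrow> ptree \<Rightarrow> bool" where
  "md0_contraction_step m Sig n S T T' \<longleftrightarrow>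
     (\<exists>u v w. u \<noteq> v \<and> {u, v} \<in> edges T \<and>
        \<not> (u \<in> labelled n T \<and> v \<in> labelled n T) \<and>
        md m Sig n S T u v = 0 \<and> w \<notin> nodes T - {u, v} \<and>
        T' = contract T u v w)"

definition tree_iso :: "nat \<Rightarrow> ptree \<Rightarrow> ptree \<Rightarrow> bool" where
  "tree_iso n T T' \<longleftrightarrow> (\<exists>\<phi>. bij_betw \<phi> (nodes T) (nodes T') \<and>
     (\<forall>x\<in>nodes T. \<forall>y\<in>nodes T. {x, y} \<in> edges T \<longleftrightarrow> {\<phi> x, \<phi> y} \<in> edges T') \<and>
     (\<forall>j<n. \<phi> (lab T j) = lab T' j))"

end

(*
  A most compact MP tree has no unlabelled node of degree below three: such a node could take over
  the states of a neighbour (by the triangle inequality for the Hamming distance) and then be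
  merged into it. A node of too high degree, on the other hand, can be split, moving all neighbours of a
  labelled inner node, or two neighbours of an unlabelled node of degree at least four, to a new
  node; copying the states of the old node to the new one shows that the cost does not change,
  and since the best fit is constant on the new edge, its min-cost is 0. Splitting repeatedly
  reaches a cubic MP tree, from which the given tree is recovered by contractions of min-cost 0.
  For the other direction, if md(u, v) = 0 then for every character there are best fits agreeing
  across {u, v}; gluing them on the two sides of the edge yields a single best fit that is
  constant on {u, v}, so contracting the edge does not raise the cost.

  Trees are handled as connected graphs in which every edge is a bridge: a bridge is reflected
  along any graph map that sends the other edges to walks avoiding its image.
*)

theory Submission
  imports Defs "HOL-Library.Transitive_Closure_Table"
begin

section \<open>Trees as connected graphs all of whose edges are bridges\<close>

definition wf_graph :: "ptree \<Rightarrow> bool" where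
  "wf_graph T \<longleftrightarrow> (\<forall>e\<in>edges T. \<exists>x y. e = {x, y} \<and> x \<noteq> y \<and> x \<in> nodes T \<and> y \<in> nodes T)"

definition adjacent_except :: "ptree \<Rightarrow> nat set \<Rightarrow> nat \<Rightarrow> nat \<Rightarrow> bool" where
  "adjacent_except T e x y \<longleftrightarrow> {x, y} \<in> edges T \<and> {x, y} \<noteq> e"

definition is_bridge :: "ptree \<Rightarrow> nat \<Rightarrow> nat \<Rightarrow> bool" where
  "is_bridge T a b \<longleftrightarrow> \<not> (adjacent_except T {a, b})\<^sup>*\<^sup>* a b"

definition edges_are_bridges :: "ptree \<Rightarrow> bool" where
  "edges_are_bridges T \<longleftrightarrow> (\<forall>a b. {a, b} \<in> edges T \<longrightarrow> a \<noteq> b \<longrightarrow> is_bridge T a b)"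

lemma wf_graph_edgeD:
  assumes "wf_graph T" "{x, y} \<in> edges T"
  shows "x \<in> nodes T" "y \<in> nodes T" "x \<noteq> y"
  using assms unfolding wf_graph_def by (auto simp: doubleton_eq_iff)

lemma wf_graph_edgeE:
  assumes "wf_graph T" "e \<in> edges T"
  obtains x y where "e = {x, y}" "x \<noteq> y" "x \<in> nodes T" "y \<in> nodes T"
  using assms unfolding wf_graph_def by blast

lemma finite_edges:
  assumes "wf_graph T" "finite (nodes T)"
  shows "finite (edges T)"
proof -
  have "edges T \<subseteq> Pow (nodes T)" using assms(1) unfolding wf_graph_def by auto
  then show ?thesis using assms(2) finite_subset by blast
qed

lemma symp_adjacent: "symp (adjacent T)"
  by (rule sympI) (simp add: adjacent_def insert_commute)

lemma symp_adjacent_except: "symp (adjacent_except T e)"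
  by (rule sympI) (simp add: adjacent_except_def insert_commute)

lemmas rtranclp_adjacent_sym = sympD[OF symp_rtranclp[OF symp_adjacent]]
lemmas rtranclp_adjacent_except_sym = sympD[OF symp_rtranclp[OF symp_adjacent_except]]

lemma rtranclp_map:
  assumes "R\<^sup>*\<^sup>* a b" "\<And>x y. R x y \<Longrightarrow> Q\<^sup>*\<^sup>* (g x) (g y)"
  shows "Q\<^sup>*\<^sup>* (g a) (g b)"
  using assms(1) by (induction rule: rtranclp_induct) (auto intro: rtranclp_trans assms(2))

lemma rtranclp_invariant:
  assumes "R\<^sup>*\<^sup>* a b" "\<And>s t. R s t \<Longrightarrow> P s = P t"
  shows "P a = P b"
  using assms(1) by (induction rule: rtranclp_induct) (auto dest: assms(2))

lemma is_bridge_sym: "is_bridge T a b \<longleftrightarrow> is_bridge T b a"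
  using rtranclp_adjacent_except_sym
  unfolding is_bridge_def by (metis insert_commute)

lemma is_bridgeI:
  assumes "P a" "\<not> P b" "\<And>s t. {s, t} \<in> edges T \<Longrightarrow> {s, t} \<noteq> {a, b} \<Longrightarrow> P s = P t"
  shows "is_bridge T a b"
  unfolding is_bridge_def
proof
  assume "(adjacent_except T {a, b})\<^sup>*\<^sup>* a b"
  then have "P a = P b"
    by (rule rtranclp_invariant) (metis adjacent_except_def assms(3))
  with assms(1,2) show False by simp
qed

lemma is_bridge_via_map:
  assumes "is_bridge T (g a) (g b)"
    and "\<And>s t. {s, t} \<in> edges T' \<Longrightarrow> {s, t} \<noteq> {a, b} \<Longrightarrow>
           (adjacent_except T {g a, g b})\<^sup>*\<^sup>* (g s) (g t)"
  shows "is_bridge T' a b"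
  unfolding is_bridge_def
proof
  assume "(adjacent_except T' {a, b})\<^sup>*\<^sup>* a b"
  then have "(adjacent_except T {g a, g b})\<^sup>*\<^sup>* (g a) (g b)"
    by (rule rtranclp_map) (metis adjacent_except_def assms(2))
  then show False using assms(1) by (simp add: is_bridge_def)
qed

definition side :: "ptree \<Rightarrow> nat \<Rightarrow> nat \<Rightarrow> nat set" where
  "side T a b = {t. (adjacent_except T {a, b})\<^sup>*\<^sup>* a t}"

lemma side_edge_iff:
  assumes "{s, t} \<in> edges T" "{s, t} \<noteq> {a, b}"
  shows "s \<in> side T a b \<longleftrightarrow> t \<in> side T a b"
proof -
  have "adjacent_except T {a, b} s t" "adjacent_except T {a, b} t s"
    using assms by (auto simp: adjacent_except_def insert_commute)
  then show ?thesis unfolding side_def by (auto intro: rtranclp.rtrancl_into_rtrancl)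
qed

lemma is_bridge_side: "is_bridge T a b \<longleftrightarrow> b \<notin> side T a b"
  by (simp add: is_bridge_def side_def)

lemma is_cycle_step_avoids_first_edge:
  assumes "is_cycle T cs" "1 \<le> k" "k < length cs"
  shows "adjacent_except T {cs ! 0, cs ! 1} (cs ! k) (cs ! ((k + 1) mod length cs))"
proof -
  let ?L = "length cs" and ?k' = "(k + 1) mod length cs"
  from assms(1) have L: "?L \<ge> 3" and dist: "distinct cs"
    and adj: "{cs ! k, cs ! ?k'} \<in> edges T"
    using assms(3) unfolding is_cycle_def adjacent_def by auto
  have nth_eq: "\<And>i j. i < ?L \<Longrightarrow> j < ?L \<Longrightarrow> cs ! i = cs ! j \<longleftrightarrow> i = j"
    using dist by (simp add: nth_eq_iff_index_eq)
  have L0: "0 < ?L" "1 < ?L" using L by auto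
  have k': "?k' < ?L" "?k' \<noteq> 1" "?k' = 0 \<Longrightarrow> k \<ge> 2"
    using assms(2,3) L by (auto simp: mod_if split: if_splits)
  have "cs ! k \<notin> {cs ! 0, cs ! 1} \<or> cs ! ?k' \<notin> {cs ! 0, cs ! 1}"
  proof (cases "?k' = 0")
    case True
    then show ?thesis using k' nth_eq[of k 0] nth_eq[of k 1] assms(3) L0 by auto
  next
    case False
    then show ?thesis using k' nth_eq[of ?k' 0] nth_eq[of ?k' 1] L0 by auto
  qed
  then have "{cs ! k, cs ! ?k'} \<noteq> {cs ! 0, cs ! 1}" by auto
  then show ?thesis using adj by (simp add: adjacent_except_def)
qed

lemma is_cycle_not_edges_are_bridges:
  assumes cycle: "is_cycle T cs"
  shows "\<not> edges_are_bridges T"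
proof
  assume bridges: "edges_are_bridges T"
  let ?L = "length cs" and ?e = "{cs ! 0, cs ! 1}"
  note step = is_cycle_step_avoids_first_edge[OF cycle]
  from cycle have L: "?L \<ge> 3" and dist: "distinct cs"
    unfolding is_cycle_def by auto
  have e: "?e \<in> edges T" using cycle L unfolding is_cycle_def adjacent_def by force
  have "cs \<noteq> []" using L by auto
  then have "cs ! 1 \<noteq> cs ! 0" using dist L nth_eq_iff_index_eq[OF dist, of 1 0] by simp
  have walk: "(adjacent_except T ?e)\<^sup>*\<^sup>* (cs ! 1) (cs ! k)" if "1 \<le> k" "k < ?L" for k
    using that
  proof (induction k)
    case (Suc k)
    then show ?case
      using step[of k] by (cases "k = 0") (auto elim: rtranclp.rtrancl_into_rtrancl)
  qed simp
  have "(?L - 1 + 1) mod ?L = 0" using \<open>cs \<noteq> []\<close> by simp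
  then have "adjacent_except T ?e (cs ! (?L - 1)) (cs ! 0)" using step[of "?L - 1"] L by simp
  moreover have "(adjacent_except T ?e)\<^sup>*\<^sup>* (cs ! 1) (cs ! (?L - 1))" using L by (intro walk) auto
  ultimately have "(adjacent_except T ?e)\<^sup>*\<^sup>* (cs ! 1) (cs ! 0)" by simp
  then have "\<not> is_bridge T (cs ! 1) (cs ! 0)" by (simp add: is_bridge_def insert_commute)
  then show False using bridges e \<open>cs ! 1 \<noteq> cs ! 0\<close>
    unfolding edges_are_bridges_def by (metis insert_commute)
qed

lemma rtrancl_path_successively:
  "rtrancl_path r x xs y \<Longrightarrow> successively r (x # xs) \<and> last (x # xs) = y"
  by (induction rule: rtrancl_path.induct) (auto simp: successively_Cons)

lemma acyclic_edges_are_bridges: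
  assumes "wf_graph T" "acyclic_graph T"
  shows "edges_are_bridges T"
  unfolding edges_are_bridges_def is_bridge_def
proof (intro allI impI notI)
  fix a b assume ab: "{a, b} \<in> edges T" "a \<noteq> b" and "(adjacent_except T {a, b})\<^sup>*\<^sup>* a b"
  then obtain xs where path: "rtrancl_path (adjacent_except T {a, b}) a xs b" "distinct (a # xs)"
    by (metis rtranclp_eq_rtrancl_path rtrancl_path_distinct)
  define qs where "qs = a # xs"
  have qs: "qs ! 0 = a" "distinct qs" "successively (adjacent_except T {a, b}) qs"
    using rtrancl_path_successively[OF path(1)] path(2) by (auto simp: qs_def)
  let ?L = "length qs"
  have "last qs = b" using rtrancl_path_successively[OF path(1)] by (simp add: qs_def)
  then have ql: "qs ! (?L - 1) = b" by (metis last_conv_nth list.distinct(1) qs_def)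
  have "?L \<noteq> 0" "?L \<noteq> 1" using qs(1) ql ab(2) by auto
  moreover have "?L \<noteq> 2"
    using successively_nth[OF qs(3), of 0] qs(1) ql by (auto simp: adjacent_except_def)
  ultimately have L: "?L \<ge> 3" by arith
  have adj: "adjacent T (qs ! k) (qs ! ((k + 1) mod ?L))" if "k < ?L" for k
  proof (cases "Suc k < ?L")
    case True
    then show ?thesis using successively_nth[OF qs(3), of k]
      by (simp add: adjacent_except_def adjacent_def)
  next
    case False
    then have "Suc k = ?L" using that by simp
    then have "k = ?L - 1" "(k + 1) mod ?L = 0" by simp_all
    then show ?thesis using qs(1) ql ab(1) by (simp add: adjacent_def insert_commute)
  qed
  have "set qs \<subseteq> nodes T"
  proof
    fix x assume "x \<in> set qs"
    then obtain k where "k < ?L" "x = qs ! k" by (auto simp: in_set_conv_nth)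
    then show "x \<in> nodes T"
      using adj[of k] wf_graph_edgeD(1)[OF assms(1)] by (auto simp: adjacent_def)
  qed
  then have "is_cycle T qs" using L qs(2) adj unfolding is_cycle_def by auto
  then show False using assms(2) unfolding acyclic_graph_def by blast
qed

lemma tree_on_altdef:
  "tree_on n T \<longleftrightarrow> finite (nodes T) \<and> nodes T \<noteq> {} \<and> wf_graph T \<and> connected_graph T \<and>
     edges_are_bridges T \<and> inj_on (lab T) {..<n} \<and> lab T ` {..<n} \<subseteq> nodes T"
  using acyclic_edges_are_bridges is_cycle_not_edges_are_bridges
  unfolding tree_on_def wf_graph_def acyclic_graph_def by blast

lemma side_separates:
  assumes "tree_on n T" "{u, v} \<in> edges T" "u \<noteq> v"
  shows "u \<in> side T u v" "v \<notin> side T u v"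
    "\<And>e. e \<in> edges T \<Longrightarrow> e \<noteq> {u, v} \<Longrightarrow> e \<subseteq> side T u v \<or> e \<inter> side T u v = {}"
proof -
  have wf: "wf_graph T" and bridges: "edges_are_bridges T" using assms(1) by (simp_all add: tree_on_altdef)
  show "u \<in> side T u v" by (simp add: side_def)
  have "is_bridge T u v" using bridges assms(2,3) unfolding edges_are_bridges_def by blast
  then show "v \<notin> side T u v" by (simp add: is_bridge_side)
  fix e assume e: "e \<in> edges T" "e \<noteq> {u, v}"
  then obtain a b where "e = {a, b}" using wf_graph_edgeE[OF wf] by blast
  then show "e \<subseteq> side T u v \<or> e \<inter> side T u v = {}" using side_edge_iff[of a b T u v] e by auto
qed

definition neighbours :: "ptree \<Rightarrow> nat \<Rightarrow> nat set" where
  "neighbours T v = {y. {v, y} \<in> edges T}"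

lemma edges_at_node:
  assumes "wf_graph T"
  shows "{e \<in> edges T. v \<in> e} = (\<lambda>y. {v, y}) ` neighbours T v"
proof (intro equalityI subsetI)
  fix e assume e: "e \<in> {e \<in> edges T. v \<in> e}"
  then obtain p q where "e = {p, q}" using wf_graph_edgeE[OF assms] by blast
  then have "e = {v, if p = v then q else p}" using e by auto
  then show "e \<in> (\<lambda>y. {v, y}) ` neighbours T v" using e by (auto simp: neighbours_def)
qed (auto simp: neighbours_def)

lemma degree_eq_card_neighbours:
  assumes "wf_graph T"
  shows "degree T v = card (neighbours T v)"
proof -
  have "inj_on (\<lambda>y. {v, y}) (neighbours T v)" by (auto simp: inj_on_def doubleton_eq_iff)
  then show ?thesis unfolding degree_def edges_at_node[OF assms] by (simp add: card_image)
qed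

lemma neighbours_subset: "wf_graph T \<Longrightarrow> neighbours T v \<subseteq> nodes T - {v}"
  unfolding neighbours_def using wf_graph_edgeD by blast

lemma finite_neighbours: "wf_graph T \<Longrightarrow> finite (nodes T) \<Longrightarrow> finite (neighbours T v)"
  using neighbours_subset finite_subset by blast

lemma ptree_eqI: "nodes A = nodes B \<Longrightarrow> edges A = edges B \<Longrightarrow> lab A = lab B \<Longrightarrow> A = B"
  by (cases A; cases B) (simp add: nodes_def edges_def lab_def)

section \<open>Contracting an edge\<close>

lemma contract_simps:
  "nodes (contract T u v w) = (nodes T - {u, v}) \<union> {w}"
  "edges (contract T u v w) = {e \<in> edges T. e \<inter> {u, v} = {}} \<union>
     {{w, x} | x. x \<notin> {u, v} \<and> ({u, x} \<in> edges T \<or> {v, x} \<in> edges T)}"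
  "lab (contract T u v w) = (\<lambda>j. if lab T j \<in> {u, v} then w else lab T j)"
  by (simp_all add: contract_def nodes_def edges_def lab_def)

locale edge_contraction =
  fixes n :: nat and T :: ptree and u v w :: nat
  assumes tree: "tree_on n T" and edge: "{u, v} \<in> edges T" and distinct: "u \<noteq> v"
    and not_both_labelled: "\<not> (u \<in> labelled n T \<and> v \<in> labelled n T)"
    and fresh: "w \<notin> nodes T - {u, v}"
begin

abbreviation "T' \<equiv> contract T u v w"

definition merge :: "nat \<Rightarrow> nat" where
  "merge t = (if t \<in> {u, v} then w else t)"

lemma wf: "wf_graph T" and bridges: "edges_are_bridges T" and finite_nodes: "finite (nodes T)"
  using tree by (simp_all add: tree_on_altdef)

lemma u_node: "u \<in> nodes T" and v_node: "v \<in> nodes T"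
  using wf_graph_edgeD[OF wf edge] by auto

lemma merge_node: "t \<in> nodes T \<Longrightarrow> merge t \<in> nodes T'"
  by (auto simp: merge_def contract_simps)

lemma merge_eq_iff:
  assumes "s \<in> nodes T" "t \<in> nodes T"
  shows "merge s = merge t \<longleftrightarrow> s = t \<or> {s, t} \<subseteq> {u, v}"
  using assms fresh by (auto simp: merge_def)

lemma edges_contract: "edges T' = (\<lambda>e. merge ` e) ` (edges T - {{u, v}})"
proof (intro equalityI subsetI)
  fix e assume "e \<in> edges T'"
  then consider "e \<in> edges T" "e \<inter> {u, v} = {}"
    | c x where "e = {w, x}" "x \<notin> {u, v}" "c \<in> {u, v}" "{c, x} \<in> edges T"
    unfolding contract_simps by blast
  then show "e \<in> (\<lambda>e. merge ` e) ` (edges T - {{u, v}})"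
  proof cases
    case 1
    then have "merge ` e = e" by (force simp: merge_def)
    moreover have "e \<noteq> {u, v}" using 1(2) by blast
    ultimately show ?thesis using 1(1) by (intro image_eqI[where x = e]) auto
  next
    case (2 c x)
    then have "merge ` {c, x} = e" by (auto simp: merge_def)
    moreover have "{c, x} \<noteq> {u, v}" using 2(2) by blast
    ultimately show ?thesis using 2(4) by (intro image_eqI[where x = "{c, x}"]) auto
  qed
next
  fix e' assume "e' \<in> (\<lambda>e. merge ` e) ` (edges T - {{u, v}})"
  then obtain e where e: "e \<in> edges T" "e \<noteq> {u, v}" "e' = merge ` e" by blast
  then obtain a b where ab: "e = {a, b}" "a \<noteq> b" using wf_graph_edgeE[OF wf] by metis
  consider "a \<notin> {u, v}" "b \<notin> {u, v}" | "a \<in> {u, v}" "b \<notin> {u, v}" | "a \<notin> {u, v}" "b \<in> {u, v}"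
    using e(2) ab distinct by auto
  then show "e' \<in> edges T'"
  proof cases
    case 1
    then show ?thesis using e ab by (auto simp: contract_simps merge_def)
  next
    case 2
    then show ?thesis using e ab unfolding contract_simps by (auto simp: merge_def)
  next
    case 3
    then show ?thesis using e ab unfolding contract_simps by (auto simp: merge_def insert_commute)
  qed
qed

lemma edge_contractE:
  assumes "e' \<in> edges T'"
  obtains p q where "{p, q} \<in> edges T" "{p, q} \<noteq> {u, v}" "e' = {merge p, merge q}"
proof -
  obtain e where e: "e \<in> edges T" "e \<noteq> {u, v}" "e' = merge ` e"
    using assms unfolding edges_contract by blast
  then obtain p q where "e = {p, q}" using wf_graph_edgeE[OF wf] by metis
  then show ?thesis using that e by simp
qed

lemma merge_edge:
  assumes "{p, q} \<in> edges T" "{p, q} \<noteq> {u, v}"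
  shows "{merge p, merge q} \<in> edges T'"
proof -
  have "merge ` {p, q} \<in> (\<lambda>e. merge ` e) ` (edges T - {{u, v}})" using assms by blast
  then show ?thesis unfolding edges_contract by simp
qed

lemma merge_edge_distinct:
  assumes "{p, q} \<in> edges T" "{p, q} \<noteq> {u, v}"
  shows "merge p \<noteq> merge q"
proof -
  have "p \<in> nodes T" "q \<in> nodes T" "p \<noteq> q" using wf_graph_edgeD[OF wf assms(1)] by auto
  then show ?thesis using merge_eq_iff assms(2) by (auto simp: doubleton_eq_iff)
qed

lemma wf_graph_contract: "wf_graph T'"
  unfolding wf_graph_def
proof
  fix e' assume "e' \<in> edges T'"
  then obtain p q where "{p, q} \<in> edges T" "{p, q} \<noteq> {u, v}" "e' = {merge p, merge q}"
    by (rule edge_contractE)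
  then show "\<exists>x y. e' = {x, y} \<and> x \<noteq> y \<and> x \<in> nodes T' \<and> y \<in> nodes T'"
    using merge_edge_distinct merge_node wf_graph_edgeD[OF wf] by blast
qed

lemma connected_contract: "connected_graph T'"
  unfolding connected_graph_def
proof (intro ballI)
  have onto: "\<exists>t'\<in>nodes T. t = merge t'" if "t \<in> nodes T'" for t
    using that u_node by (cases "t = w") (auto simp: contract_simps merge_def)
  fix a b assume "a \<in> nodes T'" "b \<in> nodes T'"
  then obtain a' b' where "a' \<in> nodes T" "b' \<in> nodes T" "a = merge a'" "b = merge b'"
    using onto by metis
  then have "(adjacent T)\<^sup>*\<^sup>* a' b'" using tree unfolding tree_on_def connected_graph_def by blast
  then have "(adjacent T')\<^sup>*\<^sup>* (merge a') (merge b')"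
  proof (rule rtranclp_map)
    fix s t assume "adjacent T s t"
    then have st: "{s, t} \<in> edges T" by (simp add: adjacent_def)
    show "(adjacent T')\<^sup>*\<^sup>* (merge s) (merge t)"
    proof (cases "{s, t} = {u, v}")
      case True
      then have "merge s = merge t" by (auto simp: merge_def doubleton_eq_iff)
      then show ?thesis by simp
    next
      case False
      then show ?thesis using merge_edge[OF st] by (simp add: adjacent_def r_into_rtranclp)
    qed
  qed
  then show "(adjacent T')\<^sup>*\<^sup>* a b" using \<open>a = merge a'\<close> \<open>b = merge b'\<close> by simp
qed

text \<open>To reflect a bridge of \<open>T'\<close> into \<open>T\<close>, the merged node is sent back to the endpoint
  \<open>c\<close> of the contracted edge that the bridge touches; all other edges of \<open>T'\<close> then lift to
  walks of \<open>T\<close>, detouring over \<open>{u, v}\<close> where necessary.\<close>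

definition lift :: "nat \<Rightarrow> nat \<Rightarrow> nat" where
  "lift c t = (if t = w then c else t)"

lemma lift_merge:
  assumes "p \<in> nodes T"
  shows "lift c (merge p) = (if p \<in> {u, v} then c else p)"
  using assms fresh by (auto simp: lift_def merge_def)

lemma walk_lift_merge:
  assumes "c \<in> {u, v}" "{u, v} \<noteq> E" "p \<in> nodes T"
  shows "(adjacent_except T E)\<^sup>*\<^sup>* (lift c (merge p)) p"
proof (cases "p \<in> {u, v} \<and> p \<noteq> c")
  case True
  then have "{c, p} = {u, v}" using assms(1) by auto
  then have "adjacent_except T E c p" using edge assms(2) by (simp add: adjacent_except_def)
  then show ?thesis using True lift_merge[OF assms(3)] by simp
qed (use lift_merge[OF assms(3)] in auto)

lemma walk_lift_edge:
  assumes "c \<in> {u, v}" "{u, v} \<noteq> E" "{p, q} \<in> edges T" "{p, q} \<noteq> E"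
  shows "(adjacent_except T E)\<^sup>*\<^sup>* (lift c (merge p)) (lift c (merge q))"
proof -
  have nodes: "p \<in> nodes T" "q \<in> nodes T" using wf_graph_edgeD[OF wf assms(3)] by auto
  have "adjacent_except T E p q" using assms(3,4) by (simp add: adjacent_except_def)
  with walk_lift_merge[OF assms(1,2) nodes(1)]
  have "(adjacent_except T E)\<^sup>*\<^sup>* (lift c (merge p)) q" by (rule rtranclp.rtrancl_into_rtrancl)
  moreover have "(adjacent_except T E)\<^sup>*\<^sup>* q (lift c (merge q))"
    using walk_lift_merge[OF assms(1,2) nodes(2)]
    by (rule rtranclp_adjacent_except_sym)
  ultimately show ?thesis by (rule rtranclp_trans)
qed

lemma is_bridge_merge:
  assumes pq: "{p, q} \<in> edges T" "{p, q} \<noteq> {u, v}"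
  shows "is_bridge T' (merge p) (merge q)"
proof -
  define c where "c = (if p \<in> {u, v} then p else if q \<in> {u, v} then q else u)"
  have c: "c \<in> {u, v}" by (simp add: c_def)
  have nodes: "p \<in> nodes T" "q \<in> nodes T" "p \<noteq> q" using wf_graph_edgeD[OF wf pq(1)] by auto
  have not_both: "\<not> (p \<in> {u, v} \<and> q \<in> {u, v})" using pq(2) nodes(3) by auto
  have lift_pq: "lift c (merge p) = p" "lift c (merge q) = q"
    using lift_merge nodes not_both by (auto simp: c_def)
  show ?thesis
  proof (rule is_bridge_via_map[where g = "lift c"])
    show "is_bridge T (lift c (merge p)) (lift c (merge q))"
      using bridges pq(1) nodes(3) lift_pq unfolding edges_are_bridges_def by simp
  next
    fix s t assume st: "{s, t} \<in> edges T'" "{s, t} \<noteq> {merge p, merge q}"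
    from st(1) obtain p' q' where pq': "{p', q'} \<in> edges T" "{p', q'} \<noteq> {u, v}"
      "{s, t} = {merge p', merge q'}" by (rule edge_contractE)
    have "{p', q'} \<noteq> {p, q}" using pq'(3) st(2) by auto
    then have walk: "(adjacent_except T {p, q})\<^sup>*\<^sup>* (lift c (merge p')) (lift c (merge q'))"
      using pq(2) by (intro walk_lift_edge[OF c _ pq'(1)]) auto
    have walk_back: "(adjacent_except T {p, q})\<^sup>*\<^sup>* (lift c (merge q')) (lift c (merge p'))"
      using walk by (rule rtranclp_adjacent_except_sym)
    from pq'(3) consider "s = merge p'" "t = merge q'" | "s = merge q'" "t = merge p'"
      by (auto simp: doubleton_eq_iff)
    then show "(adjacent_except T {lift c (merge p), lift c (merge q)})\<^sup>*\<^sup>* (lift c s) (lift c t)"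
      by cases (simp_all add: lift_pq walk walk_back)
  qed
qed

lemma edges_are_bridges_contract: "edges_are_bridges T'"
  unfolding edges_are_bridges_def
proof (intro allI impI)
  fix a b assume "{a, b} \<in> edges T'" "a \<noteq> b"
  from this(1) obtain p q where pq: "{p, q} \<in> edges T" "{p, q} \<noteq> {u, v}"
    and ab: "{a, b} = {merge p, merge q}"
    by (rule edge_contractE)
  from ab consider "a = merge p" "b = merge q" | "a = merge q" "b = merge p"
    by (auto simp: doubleton_eq_iff)
  then show "is_bridge T' a b"
    by cases (use is_bridge_merge[OF pq] is_bridge_sym in auto)
qed

lemma labels_contract: "inj_on (lab T') {..<n}" "lab T' ` {..<n} \<subseteq> nodes T'"
proof -
  have inj: "inj_on (lab T) {..<n}" and range: "lab T ` {..<n} \<subseteq> nodes T"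
    using tree by (auto simp: tree_on_def)
  have same: "lab T j = lab T k" if "j < n" "k < n" "lab T j \<in> {u, v}" "lab T k \<in> {u, v}" for j k
    using that not_both_labelled unfolding labelled_def by auto
  show "inj_on (lab T') {..<n}"
  proof (rule inj_onI)
    fix j k assume jk: "j \<in> {..<n}" "k \<in> {..<n}" "lab T' j = lab T' k"
    have "lab T j \<in> nodes T" "lab T k \<in> nodes T" using range jk(1,2) by auto
    then have "lab T j = lab T k"
      using jk same[of j k] fresh by (auto simp: contract_simps split: if_splits)
    then show "j = k" using inj jk by (auto dest: inj_onD)
  qed
  show "lab T' ` {..<n} \<subseteq> nodes T'" using range by (auto simp: contract_simps)
qed

lemma tree_on_contract: "tree_on n T'"
  unfolding tree_on_altdef
  using finite_nodes wf_graph_contract connected_contract edges_are_bridges_contract labels_contract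
  by (simp add: contract_simps)

lemma card_nodes_contract: "card (nodes T') = card (nodes T) - 1"
proof -
  have "card (nodes T - {u, v}) = card (nodes T) - 2"
    using u_node v_node distinct finite_nodes by (simp add: card_Diff_subset)
  moreover have "card {u, v} \<le> card (nodes T)" using u_node v_node finite_nodes by (intro card_mono) auto
  ultimately show ?thesis using fresh distinct finite_nodes by (simp add: contract_simps card_insert_if)
qed

lemma edge_with_outer_endpoint:
  assumes "e \<in> edges T" "e \<noteq> {u, v}"
  obtains c x where "e = {c, x}" "x \<notin> {u, v}" "c \<in> nodes T" "x \<in> nodes T"
proof -
  obtain p q where pq: "e = {p, q}" "p \<noteq> q" "p \<in> nodes T" "q \<in> nodes T"
    using wf_graph_edgeE[OF wf assms(1)] by metis
  then have "q \<notin> {u, v} \<or> p \<notin> {u, v}" using assms(2) by auto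
  then show ?thesis using that pq by (metis insert_commute)
qed

lemma no_triangle:
  assumes "x \<notin> {u, v}" "{u, x} \<in> edges T" "{v, x} \<in> edges T"
  shows False
proof -
  have "adjacent_except T {u, v} u x" "adjacent_except T {u, v} x v"
    using assms by (auto simp: adjacent_except_def insert_commute)
  then have "\<not> is_bridge T u v"
    unfolding is_bridge_def by (blast intro: r_into_rtranclp rtranclp.rtrancl_into_rtrancl)
  then show False using bridges edge distinct unfolding edges_are_bridges_def by blast
qed

lemma inj_on_merge_edges: "inj_on (\<lambda>e. merge ` e) (edges T - {{u, v}})"
proof
  fix e1 e2 assume e: "e1 \<in> edges T - {{u, v}}" "e2 \<in> edges T - {{u, v}}" "merge ` e1 = merge ` e2"
  obtain c x where e1: "e1 = {c, x}" "x \<notin> {u, v}" "c \<in> nodes T" "x \<in> nodes T"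
    using e(1) edge_with_outer_endpoint by blast
  obtain c' x' where e2: "e2 = {c', x'}" "x' \<notin> {u, v}" "c' \<in> nodes T" "x' \<in> nodes T"
    using e(2) edge_with_outer_endpoint by blast
  have x: "merge x = x" "merge x' = x'" "x \<noteq> w" "x' \<noteq> w"
    using e1 e2 fresh by (auto simp: merge_def)
  have img: "{merge c, x} = {merge c', x'}" using e(3) e1(1) e2(1) x by simp
  have merge_w: "merge t = w \<longleftrightarrow> t \<in> {u, v}" if "t \<in> nodes T" for t
    using that fresh by (auto simp: merge_def)
  show "e1 = e2"
  proof (cases "c \<in> {u, v}")
    case True
    then have "merge c = w" by (simp add: merge_def)
    then have "merge c' = w" using img x(4) by (auto simp: doubleton_eq_iff)
    then have c': "c' \<in> {u, v}" using merge_w e2(3) by blast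
    have "{w, x} = {w, x'}" using img \<open>merge c = w\<close> \<open>merge c' = w\<close> by simp
    then have "x = x'" using x(3,4) by (auto simp: doubleton_eq_iff)
    moreover have "c = c'"
    proof (rule ccontr)
      assume "c \<noteq> c'"
      then have "{c, c'} = {u, v}" using True c' by auto
      then have "{u, x} \<in> edges T" "{v, x} \<in> edges T"
        using e(1,2) e1(1) e2(1) \<open>x = x'\<close> by (auto simp: doubleton_eq_iff)
      then show False using no_triangle e1(2) by blast
    qed
    ultimately show ?thesis using e1(1) e2(1) by simp
  next
    case False
    then have "merge c = c" "c \<noteq> w" using e1(3) fresh by (auto simp: merge_def)
    then have "merge c' \<noteq> w" using img x(3) by (auto simp: doubleton_eq_iff)
    then have "merge c' = c'" by (auto simp: merge_def)
    then show ?thesis using img \<open>merge c = c\<close> e1(1) e2(1) by simp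
  qed
qed

end

section \<open>Splitting a node\<close>

text \<open>The inverse of contracting the edge \<open>{x, z}\<close>.\<close>

definition split_node :: "ptree \<Rightarrow> nat \<Rightarrow> nat \<Rightarrow> nat set \<Rightarrow> ptree" where
  "split_node T x z N = (nodes T \<union> {z},
     {e \<in> edges T. x \<notin> e} \<union> {{x, y} | y. {x, y} \<in> edges T \<and> y \<notin> N} \<union> {{z, y} | y. y \<in> N} \<union> {{x, z}},
     lab T)"

lemma split_node_simps:
  "nodes (split_node T x z N) = nodes T \<union> {z}"
  "edges (split_node T x z N) = {e \<in> edges T. x \<notin> e} \<union> {{x, y} | y. {x, y} \<in> edges T \<and> y \<notin> N} \<union>
     {{z, y} | y. y \<in> N} \<union> {{x, z}}"
  "lab (split_node T x z N) = lab T"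
  by (simp_all add: split_node_def nodes_def edges_def lab_def)

locale node_split =
  fixes n :: nat and T :: ptree and x z :: nat and N :: "nat set"
  assumes tree: "tree_on n T" and x_node: "x \<in> nodes T" and z_fresh: "z \<notin> nodes T"
    and N_neighbours: "N \<subseteq> neighbours T x"
begin

abbreviation "T' \<equiv> split_node T x z N"

lemma wf: "wf_graph T" and bridges: "edges_are_bridges T" and finite_nodes: "finite (nodes T)"
  using tree by (simp_all add: tree_on_altdef)

lemma x_ne_z: "x \<noteq> z"
  using x_node z_fresh by auto

lemma N_props:
  assumes "y \<in> N"
  shows "{x, y} \<in> edges T" "y \<in> nodes T" "y \<noteq> x" "y \<noteq> z"
proof -
  show e: "{x, y} \<in> edges T" using assms N_neighbours by (auto simp: neighbours_def)
  show "y \<in> nodes T" "y \<noteq> x" using wf_graph_edgeD[OF wf e] by auto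
  then show "y \<noteq> z" using z_fresh by auto
qed

definition redirect :: "nat set \<Rightarrow> nat set" where
  "redirect e = (if \<exists>y\<in>N. e = {x, y} then insert z (e - {x}) else e)"

definition collapse :: "nat \<Rightarrow> nat" where
  "collapse t = (if t = z then x else t)"

lemma collapse_redirect:
  assumes "e \<in> edges T"
  shows "collapse ` redirect e = e"
proof (cases "\<exists>y\<in>N. e = {x, y}")
  case True
  then obtain y where "y \<in> N" "e = {x, y}" by blast
  then show ?thesis using N_props[of y] by (auto simp: redirect_def collapse_def)
next
  case False
  obtain p q where "e = {p, q}" "p \<in> nodes T" "q \<in> nodes T" using wf_graph_edgeE[OF wf assms] by blast
  then have "z \<notin> e" using z_fresh by auto
  then show ?thesis using False by (auto simp: redirect_def collapse_def)
qed

lemma edges_split: "edges T' = insert {x, z} (redirect ` edges T)"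
proof (intro equalityI subsetI)
  fix e assume "e \<in> edges T'"
  then consider "e \<in> edges T" "x \<notin> e" | y where "e = {x, y}" "{x, y} \<in> edges T" "y \<notin> N"
    | y where "e = {z, y}" "y \<in> N" | "e = {x, z}"
    unfolding split_node_simps by blast
  then show "e \<in> insert {x, z} (redirect ` edges T)"
  proof cases
    case 1
    then have "redirect e = e" by (auto simp: redirect_def)
    then show ?thesis using 1 by (metis image_eqI insertI2)
  next
    case (2 y)
    then have "redirect e = e" by (auto simp: redirect_def doubleton_eq_iff)
    then show ?thesis using 2 by (metis image_eqI insertI2)
  next
    case (3 y)
    then have "redirect {x, y} = e" using N_props[of y] by (auto simp: redirect_def)
    then show ?thesis using N_props(1)[OF 3(2)] by (metis image_eqI insertI2)
  qed simp
next
  fix e assume "e \<in> insert {x, z} (redirect ` edges T)"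
  then consider "e = {x, z}" | e0 where "e0 \<in> edges T" "e = redirect e0" by blast
  then show "e \<in> edges T'"
  proof cases
    case (2 e0)
    then obtain p q where pq: "e0 = {p, q}" "p \<noteq> q" using wf_graph_edgeE[OF wf] by metis
    show ?thesis
    proof (cases "\<exists>y\<in>N. e0 = {x, y}")
      case True
      then obtain y where "y \<in> N" "e0 = {x, y}" by blast
      then show ?thesis using 2 N_props[of y] unfolding split_node_simps by (auto simp: redirect_def)
    next
      case False
      then show ?thesis using 2 pq unfolding split_node_simps
        by (cases "x \<in> e0") (auto simp: redirect_def insert_commute)
    qed
  qed (simp add: split_node_simps)
qed

lemma z_notin_edge: "e \<in> edges T \<Longrightarrow> z \<notin> e"
  using z_fresh wf_graph_edgeE[OF wf] by blast

lemma x_notin_N: "x \<notin> N"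
  using N_props(3) by blast

lemma redirect_N: "y \<in> N \<Longrightarrow> redirect {x, y} = {z, y}"
  using N_props(3) by (auto simp: redirect_def doubleton_eq_iff)

lemma redirect_other: "\<not> (\<exists>y\<in>N. e = {x, y}) \<Longrightarrow> redirect e = e"
  by (simp add: redirect_def)

lemma edge_splitE:
  assumes "e' \<in> edges T'" "e' \<noteq> {x, z}"
  obtains "collapse ` e' \<in> edges T" "e' = redirect (collapse ` e')"
  using assms collapse_redirect unfolding edges_split by auto

lemma wf_graph_split: "wf_graph T'"
  unfolding wf_graph_def
proof
  fix e' assume e': "e' \<in> edges T'"
  show "\<exists>a b. e' = {a, b} \<and> a \<noteq> b \<and> a \<in> nodes T' \<and> b \<in> nodes T'"
  proof (cases "e' = {x, z}")
    case False
    with e' obtain e where e: "e \<in> edges T" "e' = redirect e" unfolding edges_split by blast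
    then obtain p q where pq: "e = {p, q}" "p \<noteq> q" "p \<in> nodes T" "q \<in> nodes T"
      using wf_graph_edgeE[OF wf] by metis
    show ?thesis
    proof (cases "\<exists>y\<in>N. e = {x, y}")
      case True
      then obtain y where "y \<in> N" "e' = {z, y}" using e redirect_N by blast
      then show ?thesis using N_props[of y] by (auto simp: split_node_simps)
    next
      case False
      then show ?thesis using e pq redirect_other by (auto simp: split_node_simps)
    qed
  qed (use x_ne_z x_node in \<open>auto simp: split_node_simps\<close>)
qed

lemma walk_split_edge:
  assumes "{p, q} \<in> edges T"
  shows "(adjacent T')\<^sup>*\<^sup>* p q"
proof (cases "\<exists>y\<in>N. {p, q} = {x, y}")
  case True
  then obtain y where y: "y \<in> N" "{p, q} = {x, y}" by blast
  have "{x, z} \<in> edges T'" "{z, y} \<in> edges T'" using y(1) by (auto simp: split_node_simps)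
  then have "(adjacent T')\<^sup>*\<^sup>* x y"
    unfolding adjacent_def by (blast intro: r_into_rtranclp rtranclp.rtrancl_into_rtrancl)
  then show ?thesis
    using y(2) rtranclp_adjacent_sym[of T'] by (auto simp: doubleton_eq_iff)
next
  case False
  then have "{p, q} \<in> edges T'" using assms unfolding edges_split redirect_def by force
  then show ?thesis by (simp add: adjacent_def r_into_rtranclp)
qed

lemma connected_split: "connected_graph T'"
proof -
  have from_x: "(adjacent T')\<^sup>*\<^sup>* x t" if "t \<in> nodes T'" for t
  proof (cases "t = z")
    case True
    then show ?thesis by (simp add: adjacent_def split_node_simps r_into_rtranclp)
  next
    case False
    then have "(adjacent T)\<^sup>*\<^sup>* x t"
      using that tree x_node unfolding tree_on_def connected_graph_def split_node_simps by blast
    then have "(adjacent T')\<^sup>*\<^sup>* (id x) (id t)"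
      by (rule rtranclp_map) (simp add: adjacent_def[of T] walk_split_edge)
    then show ?thesis by simp
  qed
  show ?thesis
    unfolding connected_graph_def
    using from_x rtranclp_adjacent_sym by (meson rtranclp_trans)
qed

lemma is_bridge_split_edge: "is_bridge T' z x"
proof (rule is_bridgeI[where P = "\<lambda>t. t = z \<or> (\<exists>y\<in>N. t \<in> side T y x)"])
  have x_outside: "x \<notin> side T y x" if "y \<in> N" for y
    using bridges N_props[OF that] is_bridge_side is_bridge_sym
    unfolding edges_are_bridges_def by (metis insert_commute)
  then show "\<not> (x = z \<or> (\<exists>y\<in>N. x \<in> side T y x))" using x_ne_z by blast
  fix s t assume st: "{s, t} \<in> edges T'" "{s, t} \<noteq> {z, x}"
  then obtain e where e: "e \<in> edges T" "{s, t} = redirect e" unfolding edges_split by (auto simp: insert_commute)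
  show "(s = z \<or> (\<exists>y\<in>N. s \<in> side T y x)) = (t = z \<or> (\<exists>y\<in>N. t \<in> side T y x))"
  proof (cases "\<exists>y\<in>N. e = {x, y}")
    case True
    then obtain y where y: "y \<in> N" "{s, t} = {z, y}"
      using e redirect_N by blast
    moreover have "y \<in> side T y x" by (simp add: side_def)
    ultimately show ?thesis by (auto simp: doubleton_eq_iff)
  next
    case False
    then have st_edge: "{s, t} \<in> edges T" "s \<noteq> z" "t \<noteq> z"
      using e z_notin_edge redirect_other by auto
    have "s \<in> side T y x \<longleftrightarrow> t \<in> side T y x" if y: "y \<in> N" for y
    proof (cases "{s, t} = {y, x}")
      case True
      then show ?thesis using False e(2) y by (auto simp: redirect_def insert_commute)
    qed (use side_edge_iff[OF st_edge(1)] in blast)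
    then show ?thesis using st_edge by blast
  qed
qed simp

lemma is_bridge_split_other:
  assumes ab: "{a, b} \<in> edges T'" "{a, b} \<noteq> {x, z}"
  shows "is_bridge T' a b"
proof (rule is_bridge_via_map[where g = collapse])
  from ab obtain ab_T: "collapse ` {a, b} \<in> edges T" and ab_redirect: "{a, b} = redirect (collapse ` {a, b})"
    by (rule edge_splitE)
  then show "is_bridge T (collapse a) (collapse b)"
    using bridges wf_graph_edgeD[OF wf] unfolding edges_are_bridges_def by simp
  fix s t assume st: "{s, t} \<in> edges T'" "{s, t} \<noteq> {a, b}"
  show "(adjacent_except T {collapse a, collapse b})\<^sup>*\<^sup>* (collapse s) (collapse t)"
  proof (cases "{s, t} = {x, z}")
    case True
    then show ?thesis by (auto simp: collapse_def doubleton_eq_iff)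
  next
    case False
    with st(1) obtain "collapse ` {s, t} \<in> edges T" "{s, t} = redirect (collapse ` {s, t})"
      by (rule edge_splitE)
    then have "adjacent_except T {collapse a, collapse b} (collapse s) (collapse t)"
      using st(2) ab_redirect by (auto simp: adjacent_except_def)
    then show ?thesis by (rule r_into_rtranclp)
  qed
qed

lemma edges_are_bridges_split: "edges_are_bridges T'"
  unfolding edges_are_bridges_def
proof (intro allI impI)
  fix a b assume ab: "{a, b} \<in> edges T'" "a \<noteq> b"
  show "is_bridge T' a b"
  proof (cases "{a, b} = {x, z}")
    case True
    then have "(a, b) = (z, x) \<or> (a, b) = (x, z)" by (auto simp: doubleton_eq_iff)
    then show ?thesis using is_bridge_split_edge is_bridge_sym[of T' x z] by auto
  qed (rule is_bridge_split_other[OF ab(1)])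
qed

lemma tree_on_split: "tree_on n T'"
proof -
  have "inj_on (lab T) {..<n}" "lab T ` {..<n} \<subseteq> nodes T" using tree by (simp_all add: tree_on_def)
  then show ?thesis
    using finite_nodes wf_graph_split connected_split edges_are_bridges_split
    unfolding tree_on_altdef split_node_simps by blast
qed

lemma neighbours_split_x: "neighbours T' x = insert z (neighbours T x - N)"
  using x_ne_z x_notin_N by (auto simp: neighbours_def split_node_simps doubleton_eq_iff)

lemma neighbours_split_z: "neighbours T' z = insert x N"
  using x_ne_z z_notin_edge by (auto simp: neighbours_def split_node_simps doubleton_eq_iff)

lemma neighbours_split_other:
  assumes "v \<in> nodes T" "v \<noteq> x"
  shows "neighbours T' v = (if v \<in> N then insert z (neighbours T v - {x}) else neighbours T v)"
  using assms x_ne_z z_fresh N_props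
  by (auto simp: neighbours_def split_node_simps doubleton_eq_iff insert_commute)

lemma degree_split_x: "degree T' x = card (neighbours T x - N) + 1"
proof -
  have "z \<notin> neighbours T x - N" using neighbours_subset[OF wf] z_fresh by blast
  then show ?thesis
    using degree_eq_card_neighbours[OF wf_graph_split] neighbours_split_x
      finite_neighbours[OF wf finite_nodes] by simp
qed

lemma degree_split_z: "degree T' z = card N + 1"
proof -
  have "finite N" using N_neighbours finite_neighbours[OF wf finite_nodes] finite_subset by blast
  then show ?thesis
    using degree_eq_card_neighbours[OF wf_graph_split] neighbours_split_z x_notin_N by simp
qed

lemma degree_split_other:
  assumes "v \<in> nodes T" "v \<noteq> x"
  shows "degree T' v = degree T v"
proof -
  have fin: "finite (neighbours T v)" by (rule finite_neighbours[OF wf finite_nodes])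
  have z: "z \<notin> neighbours T v" using neighbours_subset[OF wf] z_fresh by blast
  have "card (neighbours T' v) = card (neighbours T v)"
  proof (cases "v \<in> N")
    case True
    then have "x \<in> neighbours T v" using N_props(1) by (simp add: neighbours_def insert_commute)
    then have "card (neighbours T v) > 0" using fin card_gt_0_iff by blast
    then show ?thesis
      using neighbours_split_other[OF assms] True fin z \<open>x \<in> neighbours T v\<close>
      by (simp add: card_Diff_singleton)
  qed (simp add: neighbours_split_other[OF assms])
  then show ?thesis using degree_eq_card_neighbours[OF wf] degree_eq_card_neighbours[OF wf_graph_split] by simp
qed

lemma edge_contraction_split: "edge_contraction n T' x z x"
proof -
  have "z \<notin> labelled n T'"
    using tree z_fresh by (auto simp: labelled_def split_node_simps tree_on_def)
  then show ?thesis using tree_on_split x_ne_z by unfold_locales (auto simp: split_node_simps)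
qed

lemma contract_split_node:
  assumes labels: "range (lab T) \<subseteq> nodes T"
  shows "contract T' x z x = T"
proof -
  interpret C: edge_contraction n T' x z x by (rule edge_contraction_split)
  have merge: "C.merge = collapse" by (auto simp: C.merge_def collapse_def)
  have "redirect e \<noteq> {x, z}" if e: "e \<in> edges T" for e
  proof (cases "\<exists>y\<in>N. e = {x, y}")
    case True
    then obtain y where "y \<in> N" "e = {x, y}" by blast
    then show ?thesis using redirect_N N_props(3) x_ne_z by (auto simp: doubleton_eq_iff)
  qed (use redirect_other z_notin_edge[OF e] in auto)
  then have "edges T' - {{x, z}} = redirect ` edges T" by (auto simp: edges_split)
  then have "edges (contract T' x z x) = edges T"
    by (simp add: C.edges_contract merge image_image collapse_redirect cong: image_cong)
  moreover have "nodes (contract T' x z x) = nodes T"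
    using x_node z_fresh by (auto simp: contract_simps split_node_simps)
  moreover have "lab (contract T' x z x) = lab T"
  proof
    fix j
    have "lab T j \<noteq> z" using labels z_fresh by auto
    then show "lab (contract T' x z x) j = lab T j" by (simp add: contract_simps split_node_simps)
  qed
  ultimately show ?thesis using ptree_eqI by blast
qed

end

section \<open>Costs of fits\<close>

lemma hamming_sym: "hamming m x y = hamming m y x"
  unfolding hamming_def by (simp add: eq_commute)

lemma hamming_cong:
  assumes "\<And>i. i < m \<Longrightarrow> x i = x' i \<and> y i = y' i"
  shows "hamming m x y = hamming m x' y'"
proof -
  have "{i. i < m \<and> x i \<noteq> y i} = {i. i < m \<and> x' i \<noteq> y' i}" using assms by auto
  then show ?thesis unfolding hamming_def by simp
qed

lemma hamming_self: "hamming m x x = 0"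
  unfolding hamming_def by simp

lemma hamming_triangle: "hamming m x z \<le> hamming m x y + hamming m y z"
proof -
  have "{i. i < m \<and> x i \<noteq> z i} \<subseteq> {i. i < m \<and> x i \<noteq> y i} \<union> {i. i < m \<and> y i \<noteq> z i}" by auto
  then have "hamming m x z \<le> card ({i. i < m \<and> x i \<noteq> y i} \<union> {i. i < m \<and> y i \<noteq> z i})"
    unfolding hamming_def by (intro card_mono) auto
  also have "\<dots> \<le> hamming m x y + hamming m y z" unfolding hamming_def by (rule card_Un_le)
  finally show ?thesis .
qed

lemma edge_cost_doubleton: "edge_cost m f {a, b} = hamming m (f a) (f b)"
  unfolding edge_cost_def
proof (rule the_equality)
  fix c assume "\<exists>x y. {a, b} = {x, y} \<and> c = hamming m (f x) (f y)"
  then show "c = hamming m (f a) (f b)" using hamming_sym by (auto simp: doubleton_eq_iff)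
qed blast

text \<open>For a single character, the cost of a fit counts the edges along which the state changes;
  \<open>card (\<phi> ` e) - 1\<close> is the indicator of a change along the edge \<open>e\<close>.\<close>

definition changes :: "nat set set \<Rightarrow> (nat \<Rightarrow> 'a) \<Rightarrow> nat" where
  "changes E \<phi> = (\<Sum>e\<in>E. card (\<phi> ` e) - 1)"

definition char_cost :: "ptree \<Rightarrow> (nat \<Rightarrow> 'a tuple) \<Rightarrow> nat \<Rightarrow> nat" where
  "char_cost T f i = changes (edges T) (\<lambda>t. f t i)"

lemma card_doubleton_minus_1: "card {p, q} - 1 = (if p \<noteq> q then 1 else 0)"
  by simp

lemma hamming_eq_sum: "hamming m x y = (\<Sum>i<m. if x i \<noteq> y i then 1 else 0)"
proof -
  have "{i. i < m \<and> x i \<noteq> y i} = {i \<in> {..<m}. x i \<noteq> y i}" by auto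
  then show ?thesis unfolding hamming_def by (simp add: sum.inter_filter[symmetric])
qed

lemma fit_cost_eq_sum_char_cost:
  assumes "wf_graph T"
  shows "fit_cost m T f = (\<Sum>i<m. char_cost T f i)"
proof -
  have "fit_cost m T f = (\<Sum>e\<in>edges T. \<Sum>i<m. card ((\<lambda>t. f t i) ` e) - 1)"
    unfolding fit_cost_def
  proof (rule sum.cong[OF refl])
    fix e assume "e \<in> edges T"
    then obtain a b where "e = {a, b}" using wf_graph_edgeE[OF assms] by blast
    then show "edge_cost m f e = (\<Sum>i<m. card ((\<lambda>t. f t i) ` e) - 1)"
      by (simp only: edge_cost_doubleton hamming_eq_sum image_insert image_empty card_doubleton_minus_1)
  qed
  also have "\<dots> = (\<Sum>i<m. char_cost T f i)"
    unfolding char_cost_def changes_def by (rule sum.swap[where A = "edges T" and B = "{..<m}"])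
  finally show ?thesis .
qed

lemma changes_cong:
  assumes "\<And>e t. e \<in> E \<Longrightarrow> t \<in> e \<Longrightarrow> \<phi> t = \<psi> t"
  shows "changes E \<phi> = changes E \<psi>"
  unfolding changes_def
proof (rule sum.cong[OF refl])
  fix e assume "e \<in> E"
  then have "\<phi> ` e = \<psi> ` e" using assms by (intro image_cong) auto
  then show "card (\<phi> ` e) - 1 = card (\<psi> ` e) - 1" by simp
qed

lemma changes_split:
  assumes fin: "finite E" and uv: "{u, v} \<in> E" "u \<in> A" "v \<notin> A" and nonempty: "{} \<notin> E"
    and separated: "\<And>e. e \<in> E \<Longrightarrow> e \<noteq> {u, v} \<Longrightarrow> e \<subseteq> A \<or> e \<inter> A = {}"
  shows "changes E \<phi> = changes {e \<in> E. e \<subseteq> A} \<phi> + changes {e \<in> E. e \<inter> A = {}} \<phi> + (card {\<phi> u, \<phi> v} - 1)"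
proof -
  define EA where "EA = {e \<in> E. e \<subseteq> A}"
  define EB where "EB = {e \<in> E. e \<inter> A = {}}"
  have E: "E = insert {u, v} (EA \<union> EB)"
  proof (intro equalityI subsetI)
    fix e assume "e \<in> E"
    then show "e \<in> insert {u, v} (EA \<union> EB)"
      using separated[of e] by (cases "e = {u, v}") (auto simp: EA_def EB_def)
  qed (use uv in \<open>auto simp: EA_def EB_def\<close>)
  have new: "{u, v} \<notin> EA \<union> EB" using uv by (auto simp: EA_def EB_def)
  have disjoint: "EA \<inter> EB = {}" using nonempty by (auto simp: EA_def EB_def Int_absorb2)
  have finite: "finite EA" "finite EB" using fin unfolding EA_def EB_def by simp_all
  have "changes E \<phi> = (card {\<phi> u, \<phi> v} - 1) + changes (EA \<union> EB) \<phi>"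
    unfolding changes_def E using finite new by (simp add: sum.insert)
  also have "changes (EA \<union> EB) \<phi> = changes EA \<phi> + changes EB \<phi>"
    unfolding changes_def using finite disjoint by (rule sum.union_disjoint)
  finally show ?thesis unfolding EA_def EB_def by simp
qed

lemma changes_exchange:
  assumes "finite E" "{u, v} \<in> E" "u \<in> A" "v \<notin> A" "{} \<notin> E"
    and "\<And>e. e \<in> E \<Longrightarrow> e \<noteq> {u, v} \<Longrightarrow> e \<subseteq> A \<or> e \<inter> A = {}"
  shows "changes E (\<lambda>t. if t \<in> A then \<phi> t else \<psi> t) + changes E (\<lambda>t. if t \<in> A then \<psi> t else \<phi> t)
      + (card {\<phi> u, \<phi> v} - 1) + (card {\<psi> u, \<psi> v} - 1)
    = changes E \<phi> + changes E \<psi> + (card {\<phi> u, \<psi> v} - 1) + (card {\<psi> u, \<phi> v} - 1)"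
proof -
  note split = changes_split[OF assms]
  let ?EA = "{e \<in> E. e \<subseteq> A}" and ?EB = "{e \<in> E. e \<inter> A = {}}"
  have glue: "changes E (\<lambda>t. if t \<in> A then \<chi> t else \<chi>' t)
      = changes ?EA \<chi> + changes ?EB \<chi>' + (card {\<chi> u, \<chi>' v} - 1)" for \<chi> \<chi>' :: "nat \<Rightarrow> 'a"
  proof -
    have "changes ?EA (\<lambda>t. if t \<in> A then \<chi> t else \<chi>' t) = changes ?EA \<chi>"
      "changes ?EB (\<lambda>t. if t \<in> A then \<chi> t else \<chi>' t) = changes ?EB \<chi>'"
      by (rule changes_cong; auto)+
    then show ?thesis using split[of "\<lambda>t. if t \<in> A then \<chi> t else \<chi>' t"] assms(3,4) by simp
  qed
  show ?thesis using glue[of \<phi> \<psi>] glue[of \<psi> \<phi>] split[of \<phi>] split[of \<psi>] by simp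
qed

lemma char_cost_cong: "(\<And>t. f t i = g t i) \<Longrightarrow> char_cost T f i = char_cost T g i"
  unfolding char_cost_def by simp

context edge_contraction
begin

lemma contract_fit_merge:
  assumes "t \<in> nodes T" "i < m" "\<And>i. i < m \<Longrightarrow> f u i = f v i"
  shows "(f(w := f u)) (merge t) i = f t i"
  using assms fresh by (auto simp: merge_def)

lemma is_fit_contract:
  assumes f: "is_fit m Sig n S T f" and agree: "\<And>i. i < m \<Longrightarrow> f u i = f v i"
  shows "is_fit m Sig n S T' (f(w := f u))"
  unfolding is_fit_def
proof (intro conjI ballI allI impI)
  fix t i assume "t \<in> nodes T'" "i < m"
  then show "(f(w := f u)) t i \<in> Sig i" using f u_node by (auto simp: is_fit_def contract_simps)
next
  fix j i assume j: "j < n" and i: "i < m"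
  have "lab T j \<in> nodes T" using tree j by (auto simp: tree_on_def)
  then have "(f(w := f u)) (merge (lab T j)) i = f (lab T j) i"
    using i agree by (rule contract_fit_merge)
  moreover have "lab T' j = merge (lab T j)" by (simp add: contract_simps merge_def)
  ultimately show "(f(w := f u)) (lab T' j) i = S j i" using f j i by (simp add: is_fit_def)
qed

lemma fit_cost_contract:
  assumes agree: "\<And>i. i < m \<Longrightarrow> f u i = f v i"
  shows "fit_cost m T' (f(w := f u)) = fit_cost m T f"
proof -
  let ?f' = "f(w := f u)"
  have fin: "finite (edges T)" by (rule finite_edges[OF wf finite_nodes])
  have merge_fit: "?f' (merge t) i = f t i" if "t \<in> nodes T" "i < m" for t i
    using that agree by (rule contract_fit_merge)
  have "fit_cost m T f = edge_cost m f {u, v} + sum (edge_cost m f) (edges T - {{u, v}})"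
    unfolding fit_cost_def by (rule sum.remove[OF fin edge])
  also have "edge_cost m f {u, v} = 0"
  proof -
    have "hamming m (f u) (f v) = hamming m (f u) (f u)" by (rule hamming_cong) (simp add: agree)
    then show ?thesis by (simp add: edge_cost_doubleton hamming_self)
  qed
  also have "sum (edge_cost m f) (edges T - {{u, v}}) = sum (\<lambda>e. edge_cost m ?f' (merge ` e)) (edges T - {{u, v}})"
  proof (rule sum.cong[OF refl])
    fix e assume "e \<in> edges T - {{u, v}}"
    then obtain a b where ab: "e = {a, b}" "a \<in> nodes T" "b \<in> nodes T" using wf_graph_edgeE[OF wf] by blast
    have "hamming m (f a) (f b) = hamming m (?f' (merge a)) (?f' (merge b))"
      using merge_fit[OF ab(2)] merge_fit[OF ab(3)] by (intro hamming_cong) (simp del: fun_upd_apply)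
    then show "edge_cost m f e = edge_cost m ?f' (merge ` e)"
      unfolding ab(1) image_insert image_empty edge_cost_doubleton .
  qed
  also have "\<dots> = fit_cost m T' ?f'"
    unfolding fit_cost_def edges_contract by (simp add: sum.reindex[OF inj_on_merge_edges])
  finally show ?thesis by simp
qed

end

lemma fit_cost_at_node:
  assumes "wf_graph T" "finite (nodes T)"
  shows "fit_cost m T f = sum (edge_cost m f) {e \<in> edges T. v \<notin> e} + (\<Sum>y\<in>neighbours T v. hamming m (f v) (f y))"
proof -
  have fin: "finite (edges T)" by (rule finite_edges[OF assms])
  have "inj_on (\<lambda>y. {v, y}) (neighbours T v)" by (auto simp: inj_on_def doubleton_eq_iff)
  then have "sum (edge_cost m f) {e \<in> edges T. v \<in> e} = (\<Sum>y\<in>neighbours T v. hamming m (f v) (f y))"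
    unfolding edges_at_node[OF assms(1)] by (simp add: sum.reindex edge_cost_doubleton)
  moreover have "edges T = {e \<in> edges T. v \<notin> e} \<union> {e \<in> edges T. v \<in> e}" by blast
  then have "fit_cost m T f = sum (edge_cost m f) {e \<in> edges T. v \<notin> e} + sum (edge_cost m f) {e \<in> edges T. v \<in> e}"
    unfolding fit_cost_def using fin by (metis (no_types, lifting) sum.union_disjoint finite_Un disjoint_iff mem_Collect_eq)
  ultimately show ?thesis by simp
qed

text \<open>The cost along the at most two edges at \<open>v\<close> can only drop, by the triangle inequality.\<close>

lemma fit_absorb_low_degree:
  assumes wf: "wf_graph T" "finite (nodes T)" and v: "v \<notin> labelled n T" and a: "{v, a} \<in> edges T"
    and low: "neighbours T v \<subseteq> {a, y}" and f: "is_fit m Sig n S T f"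
  shows "is_fit m Sig n S T (f(v := f a))" "fit_cost m T (f(v := f a)) \<le> fit_cost m T f"
proof -
  let ?g = "f(v := f a)"
  have va: "v \<noteq> a" "a \<in> nodes T" using wf_graph_edgeD[OF wf(1) a] by auto
  show "is_fit m Sig n S T ?g"
    using f va v unfolding is_fit_def labelled_def by auto
  have away: "sum (edge_cost m ?g) {e \<in> edges T. v \<notin> e} = sum (edge_cost m f) {e \<in> edges T. v \<notin> e}"
  proof (rule sum.cong[OF refl])
    fix e assume "e \<in> {e \<in> edges T. v \<notin> e}"
    then obtain p q where "e = {p, q}" "v \<notin> {p, q}" using wf_graph_edgeE[OF wf(1)] by blast
    then show "edge_cost m ?g e = edge_cost m f e" by (simp add: edge_cost_doubleton)
  qed
  have a_nb: "a \<in> neighbours T v" using a by (simp add: neighbours_def)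
  have near: "(\<Sum>y\<in>neighbours T v. hamming m (?g v) (?g y)) \<le> (\<Sum>y\<in>neighbours T v. hamming m (f v) (f y))"
  proof (cases "y \<in> neighbours T v \<and> y \<noteq> a")
    case True
    then have nb: "neighbours T v = {a, y}" "y \<noteq> v" using low a_nb neighbours_subset[OF wf(1)] by auto
    have "hamming m (f a) (f y) \<le> hamming m (f a) (f v) + hamming m (f v) (f y)"
      by (rule hamming_triangle)
    then have "hamming m (f a) (f y) \<le> hamming m (f v) (f a) + hamming m (f v) (f y)"
      by (simp only: hamming_sym[of m "f a" "f v"])
    then show ?thesis using nb True va by (simp add: hamming_self)
  next
    case False
    then have "neighbours T v = {a}" using low a_nb by auto
    then show ?thesis by (simp add: hamming_self)
  qed
  show "fit_cost m T ?g \<le> fit_cost m T f"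
    using near away unfolding fit_cost_at_node[OF wf, where v = v] by linarith
qed

lemma fit_cost_cong:
  assumes "wf_graph T" "\<And>t. t \<in> nodes T \<Longrightarrow> f t = g t"
  shows "fit_cost m T f = fit_cost m T g"
  unfolding fit_cost_def
proof (rule sum.cong[OF refl])
  fix e assume "e \<in> edges T"
  then obtain a b where "e = {a, b}" "a \<in> nodes T" "b \<in> nodes T" using wf_graph_edgeE[OF assms(1)] by blast
  then show "edge_cost m f e = edge_cost m g e" using assms(2) by (simp add: edge_cost_doubleton)
qed

context node_split
begin

lemma is_fit_split:
  assumes f: "is_fit m Sig n S T f"
  shows "is_fit m Sig n S T' (f(z := f x))"
proof -
  have "lab T j \<noteq> z" if "j < n" for j using tree z_fresh that by (auto simp: tree_on_def)
  then show ?thesis using f x_node by (auto simp: is_fit_def split_node_simps)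
qed

lemma fit_cost_split:
  assumes labels: "range (lab T) \<subseteq> nodes T"
  shows "fit_cost m T' (f(z := f x)) = fit_cost m T f"
proof -
  interpret C: edge_contraction n T' x z x by (rule edge_contraction_split)
  let ?g = "f(z := f x)"
  have "fit_cost m (contract T' x z x) (?g(x := ?g x)) = fit_cost m T' ?g"
    by (rule C.fit_cost_contract) (simp add: x_ne_z)
  moreover have "?g(x := ?g x) = ?g" by (rule fun_upd_triv)
  moreover have "fit_cost m T ?g = fit_cost m T f" using z_fresh by (intro fit_cost_cong[OF wf]) auto
  ultimately show ?thesis using contract_split_node[OF labels] by metis
qed

end

section \<open>Best fits\<close>

locale mp_instance =
  fixes m :: nat and Sig :: "nat \<Rightarrow> 'a set" and n :: nat and S :: "nat \<Rightarrow> 'a tuple"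
  assumes two_species: "n \<ge> 2"
    and states_nonempty: "\<forall>i<m. Sig i \<noteq> {}"
    and species_states: "\<forall>j<n. \<forall>i<m. S j i \<in> Sig i"
begin

abbreviation "fit \<equiv> is_fit m Sig n S"
abbreviation "best \<equiv> best_fit m Sig n S"
abbreviation "mp \<equiv> MP m Sig n S"

lemma fit_exists:
  assumes "tree_on n T"
  shows "\<exists>f. fit T f"
proof -
  have inj: "inj_on (lab T) {..<n}" using assms by (simp add: tree_on_def)
  define f where "f t = (if t \<in> lab T ` {..<n} then S (inv_into {..<n} (lab T) t)
      else (\<lambda>i. SOME s. s \<in> Sig i))" for t
  have "fit T f" unfolding is_fit_def
  proof (intro conjI ballI allI impI)
    fix t i assume "t \<in> nodes T" "i < m"
    show "f t i \<in> Sig i"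
    proof (cases "t \<in> lab T ` {..<n}")
      case True
      then have "inv_into {..<n} (lab T) t < n" by (meson inv_into_into lessThan_iff)
      then show ?thesis using True species_states \<open>i < m\<close> unfolding f_def by simp
    next
      case False
      then show ?thesis using states_nonempty \<open>i < m\<close> unfolding f_def by (simp add: some_in_eq)
    qed
  next
    fix j i assume "j < n" "i < m"
    then show "f (lab T j) i = S j i" unfolding f_def using inj by (simp add: inv_into_f_f)
  qed
  then show ?thesis by blast
qed

lemma mp_le_fit_cost: "fit T f \<Longrightarrow> mp T \<le> fit_cost m T f"
  unfolding MP_def by (rule Least_le) blast

lemma best_fit_exists:
  assumes "tree_on n T"
  shows "\<exists>f. best T f"
proof -
  obtain f where "fit T f" using fit_exists[OF assms] by blast
  then have "\<exists>f. fit T f \<and> mp T = fit_cost m T f"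
    unfolding MP_def by (intro LeastI_ex[where P = "\<lambda>c. \<exists>f. fit T f \<and> c = fit_cost m T f"]) blast
  then show ?thesis unfolding best_fit_def by auto
qed

lemma best_char_cost_le:
  assumes T: "wf_graph T" and f: "best T f" and g: "fit T g" and i: "i < m"
  shows "char_cost T f i \<le> char_cost T g i"
proof -
  define h where "h t j = (if j = i then g t j else f t j)" for t j
  have "fit T h" using f g unfolding h_def best_fit_def is_fit_def by auto
  then have "fit_cost m T f \<le> fit_cost m T h" using mp_le_fit_cost f unfolding best_fit_def by simp
  then have "(\<Sum>j<m. char_cost T f j) \<le> (\<Sum>j<m. char_cost T h j)"
    unfolding fit_cost_eq_sum_char_cost[OF T] .
  moreover have "(\<Sum>j<m. char_cost T h j) = char_cost T h i + (\<Sum>j\<in>{..<m} - {i}. char_cost T h j)"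
    using i by (simp add: sum.remove)
  moreover have "char_cost T h i = char_cost T g i" by (rule char_cost_cong) (simp add: h_def)
  moreover have "(\<Sum>j\<in>{..<m} - {i}. char_cost T h j) = (\<Sum>j\<in>{..<m} - {i}. char_cost T f j)"
    by (intro sum.cong refl char_cost_cong) (simp add: h_def)
  moreover have "(\<Sum>j<m. char_cost T f j) = char_cost T f i + (\<Sum>j\<in>{..<m} - {i}. char_cost T f j)"
    using i by (simp add: sum.remove)
  ultimately show ?thesis by linarith
qed

lemma best_char_cost_eq:
  assumes "wf_graph T" "best T f" "best T g" "i < m"
  shows "char_cost T f i = char_cost T g i"
  using best_char_cost_le[OF assms(1,2) _ assms(4), of g] best_char_cost_le[OF assms(1,3) _ assms(4), of f]
    assms(2,3) unfolding best_fit_def by simp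

lemma best_fitI:
  assumes T: "wf_graph T" and F: "fit T F" and f: "best T f"
    and le: "\<And>i. i < m \<Longrightarrow> char_cost T F i \<le> char_cost T f i"
  shows "best T F"
proof -
  have "fit_cost m T F \<le> fit_cost m T f"
    unfolding fit_cost_eq_sum_char_cost[OF T] using le by (intro sum_mono) simp
  then show ?thesis using F f mp_le_fit_cost[OF F] unfolding best_fit_def by simp
qed

text \<open>The two fits glued from \<open>f\<close> and \<open>g\<close> across \<open>{u, v}\<close> together cost no more than \<open>f\<close> and
  \<open>g\<close> (\<open>changes_exchange\<close>), and the one glued the other way round costs at least as much as
  a best fit.\<close>

lemma exchange_best_fits:
  assumes T: "tree_on n T" "{u, v} \<in> edges T" "u \<noteq> v"
    and f: "best T f" and g: "best T g" and i: "i < m" and agree: "f u i = g v i"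
  shows "char_cost T (\<lambda>t j. if t \<in> side T u v then f t j else g t j) i \<le> char_cost T f i"
proof -
  let ?A = "side T u v"
  have wf: "wf_graph T" and fin: "finite (edges T)" and nonempty: "{} \<notin> edges T"
    using T(1) finite_edges wf_graph_edgeE unfolding tree_on_altdef by blast+
  define \<phi> where "\<phi> = (\<lambda>t. f t i)"
  define \<psi> where "\<psi> = (\<lambda>t. g t i)"
  have glued: "char_cost T (\<lambda>t j. if t \<in> ?A then f t j else g t j) i
      = changes (edges T) (\<lambda>t. if t \<in> ?A then \<phi> t else \<psi> t)"
    unfolding char_cost_def \<phi>_def \<psi>_def by simp
  have cost_f: "char_cost T f i = changes (edges T) \<phi>" by (simp add: char_cost_def \<phi>_def)
  have cost_g: "char_cost T g i = changes (edges T) \<psi>" by (simp add: char_cost_def \<psi>_def)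
  define G where "G t j = (if j = i then (if t \<in> ?A then g t j else f t j) else f t j)" for t j
  have "fit T G" using f g unfolding best_fit_def is_fit_def G_def by auto
  then have "char_cost T f i \<le> char_cost T G i" by (rule best_char_cost_le[OF wf f _ i])
  also have "char_cost T G i = changes (edges T) (\<lambda>t. if t \<in> ?A then \<psi> t else \<phi> t)"
    unfolding char_cost_def G_def \<phi>_def \<psi>_def by simp
  finally have swapped: "char_cost T f i \<le> changes (edges T) (\<lambda>t. if t \<in> ?A then \<psi> t else \<phi> t)" .
  have "card {\<phi> u, \<psi> v} - 1 = 0" "card {\<psi> u, \<phi> v} - 1 \<le> (card {\<phi> u, \<phi> v} - 1) + (card {\<psi> u, \<psi> v} - 1)"
    using agree by (simp_all add: \<phi>_def \<psi>_def card_insert_if)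
  moreover have "char_cost T f i = char_cost T g i" by (rule best_char_cost_eq[OF wf f g i])
  ultimately show ?thesis
    using changes_exchange[OF fin T(2) side_separates(1,2)[OF T] nonempty side_separates(3)[OF T], of \<phi> \<psi>] glued cost_f cost_g swapped
    by linarith
qed

lemma md_zero_best_fit:
  assumes T: "tree_on n T" "{u, v} \<in> edges T" "u \<noteq> v" and md: "md m Sig n S T u v = 0"
  shows "\<exists>F. best T F \<and> (\<forall>i<m. F u i = F v i)"
proof -
  let ?A = "side T u v"
  have wf: "wf_graph T" using T(1) by (simp add: tree_on_altdef)
  have "finite {i. i < m \<and> VV m Sig n S T u i \<inter> VV m Sig n S T v i = {}}" by simp
  then have "VV m Sig n S T u i \<inter> VV m Sig n S T v i \<noteq> {}" if "i < m" for i
    using md that unfolding md_def by auto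
  have "\<exists>p. i < m \<longrightarrow> best T (fst p) \<and> best T (snd p) \<and> fst p u i = snd p v i" for i
  proof (cases "i < m")
    case True
    then obtain a where "a \<in> VV m Sig n S T u i" "a \<in> VV m Sig n S T v i"
      using \<open>\<And>i. i < m \<Longrightarrow> _\<close> by blast
    then obtain f g where "best T f" "best T g" "f u i = g v i" unfolding VV_def by auto
    then show ?thesis by (intro exI[of _ "(f, g)"]) simp
  qed simp
  then obtain P where P: "\<And>i. i < m \<Longrightarrow> best T (fst (P i)) \<and> best T (snd (P i)) \<and> fst (P i) u i = snd (P i) v i"
    by metis
  define F where "F t j = (if t \<in> ?A then fst (P j) t j else snd (P j) t j)" for t j
  have F: "fit T F" using P unfolding F_def best_fit_def is_fit_def by auto
  obtain f where f: "best T f" using best_fit_exists[OF T(1)] by blast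
  have "best T F"
  proof (rule best_fitI[OF wf F f])
    fix i assume i: "i < m"
    have "char_cost T F i = char_cost T (\<lambda>t j. if t \<in> ?A then fst (P i) t j else snd (P i) t j) i"
      by (rule char_cost_cong) (simp add: F_def)
    also have "\<dots> \<le> char_cost T (fst (P i)) i" using P[OF i] i by (intro exchange_best_fits[OF T]) auto
    also have "\<dots> = char_cost T f i" using P[OF i] best_char_cost_eq[OF wf _ f i] by blast
    finally show "char_cost T F i \<le> char_cost T f i" .
  qed
  moreover have "\<forall>i<m. F u i = F v i" using P side_separates(1,2)[OF T] unfolding F_def by auto
  ultimately show ?thesis by blast
qed

lemma mp_contract_le:
  assumes C: "edge_contraction n T u v w" and md: "md m Sig n S T u v = 0"
  shows "mp (contract T u v w) \<le> mp T"
proof -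
  interpret edge_contraction n T u v w by (rule C)
  obtain F where F: "best T F" "\<forall>i<m. F u i = F v i"
    using md_zero_best_fit[OF tree edge distinct md] by blast
  then have "mp T' \<le> fit_cost m T' (F(w := F u))"
    by (intro mp_le_fit_cost is_fit_contract) (auto simp: best_fit_def)
  also have "\<dots> = mp T" using F fit_cost_contract[of m F] by (simp add: best_fit_def)
  finally show ?thesis .
qed

lemma md0_contraction_step_tree:
  assumes T: "tree_on n T" and step: "md0_contraction_step m Sig n S T T'"
  shows "tree_on n T'" "mp T' \<le> mp T"
proof -
  obtain u v w where uvw: "u \<noteq> v" "{u, v} \<in> edges T" "\<not> (u \<in> labelled n T \<and> v \<in> labelled n T)"
    "md m Sig n S T u v = 0" "w \<notin> nodes T - {u, v}" "T' = contract T u v w"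
    using step unfolding md0_contraction_step_def by blast
  have C: "edge_contraction n T u v w" using T uvw by unfold_locales auto
  show "tree_on n T'" using edge_contraction.tree_on_contract[OF C] uvw(6) by simp
  show "mp T' \<le> mp T" using mp_contract_le[OF C uvw(4)] uvw(6) by simp
qed

lemma md0_contraction_chain:
  assumes "(md0_contraction_step m Sig n S)\<^sup>*\<^sup>* T T'" "tree_on n T"
  shows "tree_on n T' \<and> mp T' \<le> mp T"
  using assms
  by (induction rule: rtranclp_induct) (auto dest: md0_contraction_step_tree order_trans)

end

section \<open>Most compact MP trees\<close>

lemma tree_on_neighbour:
  assumes T: "tree_on n T" and n: "n \<ge> 2" and v: "v \<in> nodes T"
  obtains a where "{v, a} \<in> edges T"
proof -
  have "0 < n" "1 < n" using n by auto
  then have "lab T 0 \<noteq> lab T 1" "lab T 0 \<in> nodes T" "lab T 1 \<in> nodes T"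
    using T unfolding tree_on_def by (auto dest: inj_onD simp: image_subset_iff)
  then obtain t where t: "t \<in> nodes T" "t \<noteq> v" by (cases "lab T 0 = v") auto
  have "(adjacent T)\<^sup>*\<^sup>* v t" using T v t(1) unfolding tree_on_def connected_graph_def by blast
  then show ?thesis using t(2) that unfolding adjacent_def by (cases rule: converse_rtranclpE) auto
qed

lemma degree_pos:
  assumes "tree_on n T" "n \<ge> 2" "v \<in> nodes T"
  shows "degree T v \<ge> 1"
proof -
  obtain a where "{v, a} \<in> edges T" using tree_on_neighbour[OF assms] .
  then have "a \<in> neighbours T v" by (simp add: neighbours_def)
  moreover have wf: "wf_graph T" and "finite (nodes T)" using assms(1) by (simp_all add: tree_on_altdef)
  ultimately have "card (neighbours T v) > 0" using finite_neighbours card_gt_0_iff by blast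
  then show ?thesis using degree_eq_card_neighbours[OF wf] by simp
qed

definition star_tree :: "nat \<Rightarrow> ptree" where
  "star_tree n = ({..<n}, {{0, j} | j. 0 < j \<and> j < n}, id)"

lemma tree_on_star_tree:
  assumes "n \<ge> 1"
  shows "tree_on n (star_tree n)"
proof -
  have parts: "nodes (star_tree n) = {..<n}" "edges (star_tree n) = {{0, j} | j. 0 < j \<and> j < n}"
    "lab (star_tree n) = id"
    by (simp_all add: star_tree_def nodes_def edges_def lab_def)
  have from_0: "(adjacent (star_tree n))\<^sup>*\<^sup>* 0 c" if "c < n" for c
  proof (cases "c = 0")
    case False
    then have "adjacent (star_tree n) 0 c" using that unfolding adjacent_def parts by blast
    then show ?thesis by (rule r_into_rtranclp)
  qed simp
  have "connected_graph (star_tree n)"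
    unfolding connected_graph_def parts
  proof (intro ballI)
    fix a b assume "a \<in> {..<n}" "b \<in> {..<n}"
    then have "(adjacent (star_tree n))\<^sup>*\<^sup>* a 0" "(adjacent (star_tree n))\<^sup>*\<^sup>* 0 b"
      using from_0 rtranclp_adjacent_sym by auto
    then show "(adjacent (star_tree n))\<^sup>*\<^sup>* a b" by (rule rtranclp_trans)
  qed
  moreover have "edges_are_bridges (star_tree n)"
    unfolding edges_are_bridges_def
  proof (intro allI impI)
    fix a b assume "{a, b} \<in> edges (star_tree n)" "a \<noteq> b"
    then obtain j where j: "{a, b} = {0, j}" "0 < j" unfolding parts by blast
    have "is_bridge (star_tree n) j 0"
      by (rule is_bridgeI[where P = "\<lambda>t. t = j"]) (use j(2) in \<open>auto simp: parts doubleton_eq_iff\<close>)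
    moreover have "(a, b) = (j, 0) \<or> (a, b) = (0, j)" using j(1) by (auto simp: doubleton_eq_iff)
    ultimately show "is_bridge (star_tree n) a b" using is_bridge_sym[of "star_tree n" j 0] by auto
  qed
  moreover have "wf_graph (star_tree n)" unfolding wf_graph_def parts by force
  moreover have "0 \<in> {..<n}" using assms by simp
  ultimately show ?thesis unfolding tree_on_altdef parts by (simp add: ex_in_conv[symmetric]) blast
qed

context mp_instance
begin

lemma most_compact_MP_tree_exists: "\<exists>T. most_compact_MP_tree m Sig n S T"
proof -
  have "tree_on n (star_tree n)" using tree_on_star_tree two_species by simp
  then have "\<exists>T. tree_on n T \<and> (\<forall>T'. tree_on n T' \<longrightarrow> mp T \<le> mp T')"
    by (rule ex_has_least_nat)
  then obtain T1 where "MP_tree m Sig n S T1" by (auto simp: MP_tree_def)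
  then have "\<exists>T. MP_tree m Sig n S T \<and> (\<forall>T'. MP_tree m Sig n S T' \<longrightarrow> card (nodes T) \<le> card (nodes T'))"
    by (rule ex_has_least_nat)
  then show ?thesis unfolding most_compact_MP_tree_def .
qed

lemma card_le_2_subset_doubleton:
  assumes "finite A" "card A \<le> 2" "a \<in> A"
  obtains y where "A \<subseteq> {a, y}"
proof -
  have "card (A - {a}) \<le> 1" using assms by simp
  then have "\<forall>p\<in>A - {a}. \<forall>q\<in>A - {a}. p = q" using assms(1) by (simp add: card_le_Suc0_iff_eq)
  then show ?thesis using that by (cases "A - {a} = {}") blast+
qed

lemma most_compact_unlabelled_degree:
  assumes mc: "most_compact_MP_tree m Sig n S T" and v: "v \<in> nodes T" "v \<notin> labelled n T"
  shows "degree T v \<ge> 3"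
proof (rule ccontr)
  assume "\<not> degree T v \<ge> 3"
  have mpt: "MP_tree m Sig n S T" and T: "tree_on n T"
    using mc by (simp_all add: most_compact_MP_tree_def MP_tree_def)
  have wf: "wf_graph T" and fin: "finite (nodes T)" using T by (simp_all add: tree_on_altdef)
  obtain a where a: "{v, a} \<in> edges T" using tree_on_neighbour[OF T two_species v(1)] .
  have "card (neighbours T v) \<le> 2" using \<open>\<not> degree T v \<ge> 3\<close> degree_eq_card_neighbours[OF wf] by simp
  moreover have "a \<in> neighbours T v" using a by (simp add: neighbours_def)
  ultimately obtain y where low: "neighbours T v \<subseteq> {a, y}"
    by (rule card_le_2_subset_doubleton[OF finite_neighbours[OF wf fin]])
  have "v \<noteq> a" using wf_graph_edgeD[OF wf a] by simp
  interpret C: edge_contraction n T v a a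
    using T a v(2) \<open>v \<noteq> a\<close> by unfold_locales auto
  obtain f where "best T f" using best_fit_exists[OF T] by blast
  then have f: "fit T f" "fit_cost m T f = mp T" by (simp_all add: best_fit_def)
  let ?g = "f(v := f a)"
  have g: "fit T ?g" "fit_cost m T ?g \<le> fit_cost m T f"
    using fit_absorb_low_degree[OF wf fin v(2) a low f(1)] by simp_all
  have agree: "?g v i = ?g a i" if "i < m" for i by simp
  have "mp C.T' \<le> fit_cost m C.T' (?g(a := ?g v))"
    by (rule mp_le_fit_cost[OF C.is_fit_contract[OF g(1) agree]])
  also have "\<dots> = fit_cost m T ?g" by (rule C.fit_cost_contract[OF agree])
  finally have "mp C.T' \<le> mp T" using g(2) f(2) by simp
  then have "mp C.T' \<le> mp T''" if "tree_on n T''" for T''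
    using mpt that unfolding MP_tree_def by (blast intro: order_trans)
  then have "MP_tree m Sig n S C.T'" using C.tree_on_contract by (simp add: MP_tree_def)
  then have "card (nodes T) \<le> card (nodes C.T')" using mc unfolding most_compact_MP_tree_def by blast
  moreover have "card (nodes T) > 0" using v(1) fin card_gt_0_iff by blast
  ultimately show False using C.card_nodes_contract by simp
qed

text \<open>Copying the states of \<open>x\<close> to \<open>z\<close> turns a best fit of \<open>T\<close> into a fit of the split
  tree of the same cost, which is therefore best and constant on \<open>{x, z}\<close>.\<close>

lemma md0_contraction_step_split:
  assumes P: "node_split n T x z N" and mpt: "MP_tree m Sig n S T" and labels: "range (lab T) \<subseteq> nodes T"
  shows "MP_tree m Sig n S (split_node T x z N)" "md0_contraction_step m Sig n S (split_node T x z N) T"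
proof -
  interpret node_split n T x z N by (rule P)
  interpret C: edge_contraction n T' x z x by (rule edge_contraction_split)
  obtain f where "best T f" using best_fit_exists[OF tree] by blast
  then have f: "fit T f" "fit_cost m T f = mp T" by (simp_all add: best_fit_def)
  let ?g = "f(z := f x)"
  have g: "fit T' ?g" "fit_cost m T' ?g = mp T" using is_fit_split[OF f(1)] fit_cost_split[OF labels, of m f] f(2) by simp_all
  have "mp T \<le> mp T'" using mpt tree_on_split unfolding MP_tree_def by blast
  then have eq: "mp T' = mp T" using g mp_le_fit_cost[OF g(1)] by simp
  then have best: "best T' ?g" using g by (simp add: best_fit_def)
  have "mp T \<le> mp T''" if "tree_on n T''" for T'' using mpt that unfolding MP_tree_def by blast
  then show "MP_tree m Sig n S T'" using tree_on_split eq unfolding MP_tree_def by simp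
  have "?g x i \<in> VV m Sig n S T' x i \<inter> VV m Sig n S T' z i" for i
  proof -
    have "?g x i \<in> VV m Sig n S T' x i" "?g z i \<in> VV m Sig n S T' z i" using best unfolding VV_def by blast+
    then show ?thesis using x_ne_z by simp
  qed
  then have "{i. i < m \<and> VV m Sig n S T' x i \<inter> VV m Sig n S T' z i = {}} = {}" by blast
  then have "md m Sig n S T' x z = 0" unfolding md_def by simp
  then show "md0_contraction_step m Sig n S T' T"
    unfolding md0_contraction_step_def
    using C.edge C.distinct C.not_both_labelled contract_split_node[OF labels]
    by (intro exI[of _ x] exI[of _ z]) simp
qed

end

text \<open>The excess of a node is how far its degree exceeds that of a node of a cubic tree (truncated
  subtraction: lower degrees have excess 0).\<close>

definition excess :: "nat \<Rightarrow> ptree \<Rightarrow> nat \<Rightarrow> nat" where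
  "excess n T t = (if t \<in> labelled n T then degree T t - 1 else degree T t - 3)"

definition total_excess :: "nat \<Rightarrow> ptree \<Rightarrow> nat" where
  "total_excess n T = (\<Sum>t\<in>nodes T. excess n T t)"

lemma cubic_if_no_excess:
  assumes T: "tree_on n T" "n \<ge> 2" and deg3: "\<forall>v\<in>nodes T. v \<notin> labelled n T \<longrightarrow> degree T v \<ge> 3"
    and no_excess: "\<forall>t\<in>nodes T. excess n T t = 0"
  shows "cubic_tree_on n T"
proof -
  have "(v \<in> labelled n T \<longleftrightarrow> degree T v = 1) \<and> (degree T v \<noteq> 1 \<longrightarrow> degree T v = 3)"
    if v: "v \<in> nodes T" for v
  proof -
    have "excess n T v = 0" "v \<notin> labelled n T \<Longrightarrow> degree T v \<ge> 3" using deg3 no_excess v by auto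
    then show ?thesis using degree_pos[OF T v] by (cases "v \<in> labelled n T") (auto simp: excess_def)
  qed
  then show ?thesis using T(1) by (simp add: cubic_tree_on_def)
qed

lemma excess_neighbours_choice:
  assumes T: "tree_on n T" and x: "excess n T x \<noteq> 0"
  obtains N where "N \<subseteq> neighbours T x" "card N \<ge> 2"
    "x \<in> labelled n T \<Longrightarrow> N = neighbours T x"
    "x \<notin> labelled n T \<Longrightarrow> card N = 2 \<and> card (neighbours T x) \<ge> 4"
proof (cases "x \<in> labelled n T")
  case True
  then show ?thesis
    using that x degree_eq_card_neighbours T by (auto simp: excess_def tree_on_altdef)
next
  case False
  then have "card (neighbours T x) \<ge> 4"
    using x degree_eq_card_neighbours T by (auto simp: excess_def tree_on_altdef)
  moreover obtain N where "N \<subseteq> neighbours T x" "card N = 2"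
    using obtain_subset_with_card_n[of 2 "neighbours T x"] calculation by auto
  ultimately show ?thesis using that False by simp
qed

lemma agree_below_n:
  assumes "nodes A = nodes B" "edges A = edges B" "\<And>j. j < n \<Longrightarrow> lab A j = lab B j"
  shows "tree_on n A = tree_on n B" "labelled n A = labelled n B" "MP m Sig n S A = MP m Sig n S B"
proof -
  have labels: "lab A ` {..<n} = lab B ` {..<n}" "inj_on (lab A) {..<n} = inj_on (lab B) {..<n}"
    using assms(3) by (auto intro!: image_cong inj_on_cong)
  have "adjacent A = adjacent B" unfolding adjacent_def using assms(2) by simp
  then have "is_cycle A = is_cycle B" unfolding is_cycle_def using assms(1) by simp
  then show "tree_on n A = tree_on n B"
    unfolding tree_on_def connected_graph_def acyclic_graph_def
    using assms(1,2) labels \<open>adjacent A = adjacent B\<close> by simp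
  show "labelled n A = labelled n B" unfolding labelled_def using labels by simp
  have fits: "is_fit m Sig n S A = is_fit m Sig n S B" unfolding is_fit_def using assms by (intro ext) simp
  have costs: "fit_cost m A f = fit_cost m B f" for f unfolding fit_cost_def using assms(2) by simp
  show "MP m Sig n S A = MP m Sig n S B" unfolding MP_def fits costs ..
qed

context node_split
begin

lemma labelled_split: "labelled n T' = labelled n T"
  by (simp add: labelled_def split_node_simps)

lemma total_excess_split:
  "total_excess n T' = excess n T' z + excess n T' x + (total_excess n T - excess n T x)"
proof -
  have other: "excess n T' t = excess n T t" if "t \<in> nodes T - {x}" for t
    using degree_split_other that by (simp add: excess_def labelled_split)
  have "total_excess n T' = excess n T' z + (\<Sum>t\<in>nodes T. excess n T' t)"
    unfolding total_excess_def split_node_simps using finite_nodes z_fresh by simp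
  also have "(\<Sum>t\<in>nodes T. excess n T' t) = excess n T' x + (\<Sum>t\<in>nodes T - {x}. excess n T t)"
    using finite_nodes x_node other by (simp add: sum.remove)
  also have "(\<Sum>t\<in>nodes T - {x}. excess n T t) = total_excess n T - excess n T x"
    unfolding total_excess_def using finite_nodes x_node by (simp add: sum_diff1_nat)
  finally show ?thesis by simp
qed

lemma split_excess:
  assumes deg3: "\<forall>v\<in>nodes T. v \<notin> labelled n T \<longrightarrow> degree T v \<ge> 3"
    and N: "card N \<ge> 2" "x \<in> labelled n T \<Longrightarrow> N = neighbours T x"
      "x \<notin> labelled n T \<Longrightarrow> card N = 2 \<and> card (neighbours T x) \<ge> 4"
  shows "total_excess n T' < total_excess n T"
    "\<forall>v\<in>nodes T'. v \<notin> labelled n T' \<longrightarrow> degree T' v \<ge> 3"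
proof -
  have "finite N" using N_neighbours finite_neighbours[OF wf finite_nodes] finite_subset by blast
  then have degree_x: "degree T' x = card (neighbours T x) - card N + 1"
    using degree_split_x N_neighbours by (simp add: card_Diff_subset)
  have degree_x_old: "degree T x = card (neighbours T x)" by (rule degree_eq_card_neighbours[OF wf])
  have "labelled n T \<subseteq> nodes T" using tree by (simp add: labelled_def tree_on_def)
  then have z_unlabelled: "z \<notin> labelled n T'" using z_fresh labelled_split by auto
  have "excess n T' z + excess n T' x < excess n T x"
  proof (cases "x \<in> labelled n T")
    case True
    then show ?thesis
      using N(1,2) degree_x degree_x_old degree_split_z z_unlabelled by (simp add: excess_def labelled_split)
  next
    case False
    then show ?thesis
      using N(3) degree_x degree_x_old degree_split_z z_unlabelled by (simp add: excess_def labelled_split) arith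
  qed
  moreover have "excess n T x \<le> total_excess n T"
    unfolding total_excess_def using x_node finite_nodes by (simp add: member_le_sum)
  ultimately show "total_excess n T' < total_excess n T" using total_excess_split by linarith
  show "\<forall>v\<in>nodes T'. v \<notin> labelled n T' \<longrightarrow> degree T' v \<ge> 3"
  proof (intro ballI impI)
    fix v assume v: "v \<in> nodes T'" "v \<notin> labelled n T'"
    consider "v = z" | "v = x" | "v \<in> nodes T" "v \<noteq> x" using v(1) unfolding split_node_simps by blast
    then show "degree T' v \<ge> 3"
    proof cases
      case 1
      then show ?thesis using degree_split_z N(1) by simp
    next
      case 2
      then show ?thesis using v(2) N(3) degree_x by (simp add: labelled_split) arith
    next
      case 3
      then show ?thesis using v(2) deg3 degree_split_other by (simp add: labelled_split)
    qed
  qed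
qed

end

context mp_instance
begin

lemma expand_excess_node:
  assumes mpt: "MP_tree m Sig n S T" and labels: "range (lab T) \<subseteq> nodes T"
    and deg3: "\<forall>v\<in>nodes T. v \<notin> labelled n T \<longrightarrow> degree T v \<ge> 3"
    and x: "x \<in> nodes T" "excess n T x \<noteq> 0"
  obtains T' where "MP_tree m Sig n S T'" "range (lab T') \<subseteq> nodes T'"
    "\<forall>v\<in>nodes T'. v \<notin> labelled n T' \<longrightarrow> degree T' v \<ge> 3"
    "total_excess n T' < total_excess n T" "md0_contraction_step m Sig n S T' T"
proof -
  have T: "tree_on n T" using mpt by (simp add: MP_tree_def)
  have fin: "finite (nodes T)" using T by (simp add: tree_on_altdef)
  obtain N where N: "N \<subseteq> neighbours T x" "card N \<ge> 2"
    "x \<in> labelled n T \<Longrightarrow> N = neighbours T x"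
    "x \<notin> labelled n T \<Longrightarrow> card N = 2 \<and> card (neighbours T x) \<ge> 4"
    using excess_neighbours_choice[OF T x(2)] by blast
  obtain z where z: "z \<notin> nodes T" using ex_new_if_finite[OF infinite_UNIV_nat fin] by blast
  have P: "node_split n T x z N" using T x(1) z N(1) by unfold_locales
  have "range (lab (split_node T x z N)) \<subseteq> nodes (split_node T x z N)"
    using labels by (auto simp: split_node_simps)
  then show ?thesis
    using that md0_contraction_step_split[OF P mpt labels] node_split.split_excess[OF P deg3 N(2-4)]
    by blast
qed

lemma cubic_expansion:
  assumes "MP_tree m Sig n S T" "range (lab T) \<subseteq> nodes T"
    "\<forall>v\<in>nodes T. v \<notin> labelled n T \<longrightarrow> degree T v \<ge> 3"
  shows "\<exists>T0. cubic_tree_on n T0 \<and> MP_tree m Sig n S T0 \<and> (md0_contraction_step m Sig n S)\<^sup>*\<^sup>* T0 T"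
  using assms
proof (induction "total_excess n T" arbitrary: T rule: less_induct)
  case less
  show ?case
  proof (cases "\<forall>t\<in>nodes T. excess n T t = 0")
    case True
    then have "cubic_tree_on n T"
      using less.prems two_species by (intro cubic_if_no_excess) (auto simp: MP_tree_def)
    then show ?thesis using less.prems(1) by blast
  next
    case False
    then obtain x where "x \<in> nodes T" "excess n T x \<noteq> 0" by blast
    then obtain T' where T': "MP_tree m Sig n S T'" "range (lab T') \<subseteq> nodes T'"
      "\<forall>v\<in>nodes T'. v \<notin> labelled n T' \<longrightarrow> degree T' v \<ge> 3"
      "total_excess n T' < total_excess n T" "md0_contraction_step m Sig n S T' T"
      using expand_excess_node[OF less.prems] by metis
    then obtain T0 where "cubic_tree_on n T0" "MP_tree m Sig n S T0" "(md0_contraction_step m Sig n S)\<^sup>*\<^sup>* T0 T'"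
      using less.hyps by blast
    then show ?thesis using T'(5) by (blast intro: rtranclp.rtrancl_into_rtrancl)
  qed
qed

text \<open>Contraction relabels every index \<open>j\<close> whose node disappears, including \<open>j \<ge> n\<close>; so
  before expanding, the irrelevant labels \<open>j \<ge> n\<close> are moved onto a node of the tree.\<close>

lemma most_compact_MP_tree_from_cubic:
  assumes mc: "most_compact_MP_tree m Sig n S T"
  shows "\<exists>T0 Tk. cubic_tree_on n T0 \<and> MP_tree m Sig n S T0 \<and>
           (md0_contraction_step m Sig n S)\<^sup>*\<^sup>* T0 Tk \<and> tree_iso n Tk T"
proof -
  have mpt: "MP_tree m Sig n S T" and T: "tree_on n T"
    using mc by (simp_all add: most_compact_MP_tree_def MP_tree_def)
  define Tn where "Tn = (nodes T, edges T, \<lambda>j. if j < n then lab T j else lab T 0)"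
  have parts: "nodes Tn = nodes T" "edges Tn = edges T" "\<And>j. j < n \<Longrightarrow> lab Tn j = lab T j"
    by (simp_all add: Tn_def nodes_def edges_def lab_def)
  note same = agree_below_n[OF parts]
  have "MP_tree m Sig n S Tn" using mpt unfolding MP_tree_def by (simp add: same)
  moreover have "range (lab Tn) \<subseteq> nodes Tn"
    using T two_species by (auto simp: Tn_def nodes_def lab_def tree_on_def)
  moreover have "\<forall>v\<in>nodes Tn. v \<notin> labelled n Tn \<longrightarrow> degree Tn v \<ge> 3"
    using most_compact_unlabelled_degree[OF mc] same(2) parts(1,2) by (simp add: degree_def)
  ultimately obtain T0 where "cubic_tree_on n T0" "MP_tree m Sig n S T0"
    "(md0_contraction_step m Sig n S)\<^sup>*\<^sup>* T0 Tn"
    using cubic_expansion by blast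
  moreover have "tree_iso n Tn T" unfolding tree_iso_def by (intro exI[of _ id]) (simp add: parts)
  ultimately show ?thesis by blast
qed

end

theorem theorem3:
  fixes n m :: nat and Sig :: "nat \<Rightarrow> 'a set" and S :: "nat \<Rightarrow> 'a tuple"
  assumes "n \<ge> 2" and "m \<ge> 1"
    and "\<forall>i<m. finite (Sig i) \<and> Sig i \<noteq> {}"
    and "\<forall>j<n. \<forall>i<m. S j i \<in> Sig i"
    and "\<forall>j<n. \<forall>k<n. j \<noteq> k \<longrightarrow> (\<exists>i<m. S j i \<noteq> S k i)"
  shows "(\<forall>T. most_compact_MP_tree m Sig n S T \<longrightarrow>
            (\<exists>T0 Tk. cubic_tree_on n T0 \<and>
                (\<forall>T'. cubic_tree_on n T' \<longrightarrow> MP m Sig n S T0 \<le> MP m Sig n S T') \<and>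
                (md0_contraction_step m Sig n S)\<^sup>*\<^sup>* T0 Tk \<and> tree_iso n Tk T))
       \<and> (\<forall>T0 Tk. cubic_tree_on n T0 \<and>
                (\<forall>T'. cubic_tree_on n T' \<longrightarrow> MP m Sig n S T0 \<le> MP m Sig n S T') \<and>
                (md0_contraction_step m Sig n S)\<^sup>*\<^sup>* T0 Tk \<longrightarrow> MP_tree m Sig n S Tk)"
proof -
  interpret mp_instance m Sig n S using assms(1,3,4) by unfold_locales auto
  have cubic_MP: "mp T0 \<le> mp T'" if "MP_tree m Sig n S T0" "cubic_tree_on n T'" for T0 T'
    using that unfolding MP_tree_def cubic_tree_on_def by blast
  show ?thesis
  proof (intro conjI allI impI)
    fix T assume "most_compact_MP_tree m Sig n S T"
    then show "\<exists>T0 Tk. cubic_tree_on n T0 \<and> (\<forall>T'. cubic_tree_on n T' \<longrightarrow> mp T0 \<le> mp T') \<and>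
        (md0_contraction_step m Sig n S)\<^sup>*\<^sup>* T0 Tk \<and> tree_iso n Tk T"
      using most_compact_MP_tree_from_cubic cubic_MP by blast
  next
    fix T0 Tk assume T0: "cubic_tree_on n T0 \<and> (\<forall>T'. cubic_tree_on n T' \<longrightarrow> mp T0 \<le> mp T') \<and>
        (md0_contraction_step m Sig n S)\<^sup>*\<^sup>* T0 Tk"
    moreover have "tree_on n T0" using T0 by (simp add: cubic_tree_on_def)
    ultimately have Tk: "tree_on n Tk" "mp Tk \<le> mp T0" using md0_contraction_chain by blast+
    obtain T where "most_compact_MP_tree m Sig n S T" using most_compact_MP_tree_exists by blast
    then obtain T1 where T1: "cubic_tree_on n T1" "MP_tree m Sig n S T1"
      using most_compact_MP_tree_from_cubic by blast
    have "mp Tk \<le> mp T'" if "tree_on n T'" for T'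
      using Tk(2) T0 T1 that unfolding MP_tree_def by (meson order_trans)
    then show "MP_tree m Sig n S Tk" using Tk(1) by (simp add: MP_tree_def)
  qed
qed

end
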